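(* Let $W=e^{-q}$ be the bivariate Freud weight and $\{\mathbb{P}_n\}$ an orthonormal polynomial system for it, with matrices $G_n$, $A_{n,i}$, $B_{n,i}$, $C_{n,i}$ as in the context. Then for $i=1,2$: (i) $A_{n,i}=G_nL_{n,i}G_{n+1}^{-1}$ for $n\geqslant0$; (ii) $B_{n,i}=G_nL_{n-1,i}^TN_{n,i}G_{n-1}^{-1}$ for $n\geqslant1$; (iii) $C_{n,i}^T=G_{n-3}L_{n-3,i}L_{n-2,i}L_{n-1,i}K_{n,i}G_n^{-1}$ for $n\geqslant3$. Moreover, the matrix $A_{n,i}^{-1}:=G_{n+1}L_{n,i}^TG_n^{-1}$ is a right (pseudo) inverse of $A_{n,i}$, i.e. $A_{n,i}A_{n,i}^{-1}=I_{n+1}$.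
   Context: Parameters $a_{4,0},a_{2,2},a_{0,4}\geqslant0$, $a_{2,0},a_{0,2}\in\mathbb{R}$, $a_{4,0}+a_{2,2}>0$, $a_{2,2}+a_{0,4}>0$; $q(x,y)=a_{4,0}x^4+a_{2,2}x^2y^2+a_{0,4}y^4+a_{2,0}x^2+a_{0,2}y^2$, $W=e^{-q}$ on $\mathbb{R}^2$, inner product $(f,g)=\iint fgW\,dx\,dy$ (entrywise on vectors). $\mathbb{X}_n=(x^n,x^{n-1}y,\dots,y^n)^T$. An orthonormal polynomial system is a sequence of column vectors $\mathbb{P}_n=(P_{n,0},\dots,P_{n,n})^T$ of linearly independent polynomials of exact total degree $n$ with $(\mathbb{P}_n,\mathbb{P}_m^T)=\delta_{nm}I_{n+1}$. Write $\mathbb{P}_n=\sum_{k=0}^nG^n_k\mathbb{X}_k$, $G_n:=G^n_n$ invertible. $A_{n,i}$ ($(n+1)\times(n+2)$) are defined by $x\mathbb{P}_n=A_{n,1}\mathbb{P}_{n+1}+A_{n-1,1}^T\mathbb{P}_{n-1}$, $y\mathbb{P}_n=A_{n,2}\mathbb{P}_{n+1}+A_{n-1,2}^T\mathbb{P}_{n-1}$ ($\mathbb{P}_{-1}=0$). $B_{n,i}$ ($(n+1)\times n$) and $C_{n,i}$ ($(n+1)\times(n-2)$, zero for $n=1,2$) are the matrices in the structure relations $\partial_x\mathbb{P}_n=B_{n,1}\mathbb{P}_{n-1}+C_{n,1}\mathbb{P}_{n-3}$, $\partial_y\mathbb{P}_n=B_{n,2}\mathbb{P}_{n-1}+C_{n,2}\mathbb{P}_{n-3}$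 ($n\geqslant1$, $\mathbb{P}_{-2}=\mathbb{P}_{-1}=0$), which hold for this weight. $L_{n,1}=(I_{n+1}\,|\,0)$, $L_{n,2}=(0\,|\,I_{n+1})$ ($(n+1)\times(n+2)$). $N_{n,1}=\mathrm{diag}(n,n-1,\dots,1)$, $N_{n,2}=\mathrm{diag}(1,\dots,n)$ ($n\times n$). $K_{n,1}$ is the $(n+1)\times(n+1)$ upper triangular matrix with diagonal entries $4a_{4,0}$, entries $(j,j+2)$ equal to $2a_{2,2}$, others zero; $K_{n,2}$ is the $(n+1)\times(n+1)$ lower triangular matrix with diagonal entries $4a_{0,4}$, entries $(j+2,j)$ equal to $2a_{2,2}$, others zero. *)

theory Defs
  imports "HOL-Analysis.Analysis" "Jordan_Normal_Form.Matrix"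
begin

definition freud_q :: "real \<Rightarrow> real \<Rightarrow> real \<Rightarrow> real \<Rightarrow> real \<Rightarrow> real \<times> real \<Rightarrow> real" where
  "freud_q a40 a22 a04 a20 a02 p =
     (case p of (x, y) \<Rightarrow> a40 * x^4 + a22 * x^2 * y^2 + a04 * y^4 + a20 * x^2 + a02 * y^2)"

definition freud_W :: "real \<Rightarrow> real \<Rightarrow> real \<Rightarrow> real \<Rightarrow> real \<Rightarrow> real \<times> real \<Rightarrow> real" where
  "freud_W a40 a22 a04 a20 a02 p = exp (- freud_q a40 a22 a04 a20 a02 p)"

definition monvec :: "nat \<Rightarrow> real \<times> real \<Rightarrow> real vec" where
  "monvec k p = (case p of (x, y) \<Rightarrow> vec (k + 1) (\<lambda>l. x ^ (k - l) * y ^ l))"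

text \<open>Polynomial system given by its coefficient matrices:
  P_n = sum_{k=0}^n G^n_k X_k, where  Gc n k  is the (n+1) x (k+1) matrix G^n_k.
  polyP Gc n j p is the j-th entry (0-indexed) P_{n,j}(p); polyvec Gc n p is the vector P_n(p).\<close>

definition polyP :: "(nat \<Rightarrow> nat \<Rightarrow> real mat) \<Rightarrow> nat \<Rightarrow> nat \<Rightarrow> real \<times> real \<Rightarrow> real" where
  "polyP Gc n j p = (\<Sum>k\<le>n. (Gc n k *\<^sub>v monvec k p) $ j)"

definition polyvec :: "(nat \<Rightarrow> nat \<Rightarrow> real mat) \<Rightarrow> nat \<Rightarrow> real \<times> real \<Rightarrow> real vec" where
  "polyvec Gc n p = vec (n + 1) (\<lambda>j. polyP Gc n j p)"

text \<open>Orthonormal polynomial system w.r.t. the weight W: G^n_k has size (n+1)x(k+1),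
  G_n = G^n_n is invertible (linear independence, exact total degree n), and
  (P_n, P_m^T) = delta_{nm} I_{n+1}, with all the integrals existing.\<close>

definition orthonormal_system :: "(real \<times> real \<Rightarrow> real) \<Rightarrow> (nat \<Rightarrow> nat \<Rightarrow> real mat) \<Rightarrow> bool" where
  "orthonormal_system W Gc \<longleftrightarrow>
     (\<forall>n k. k \<le> n \<longrightarrow> Gc n k \<in> carrier_mat (n + 1) (k + 1)) \<and>
     (\<forall>n. invertible_mat (Gc n n)) \<and>
     (\<forall>n m j l. j \<le> n \<longrightarrow> l \<le> m \<longrightarrow>
        has_bochner_integral lborel (\<lambda>p. polyP Gc n j p * polyP Gc m l p * W p)
          (if n = m \<and> j = l then 1 else 0))"

definition minv :: "real mat \<Rightarrow> real mat" where
  "minv A = (SOME B. B \<in> carrier_mat (dim_row A) (dim_row A) \<and> inverts_mat A B \<and> inverts_mat B A)"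

definition coord :: "nat \<Rightarrow> real \<times> real \<Rightarrow> real" where
  "coord i p = (if i = 1 then fst p else snd p)"

definition partial :: "nat \<Rightarrow> (real \<times> real \<Rightarrow> real) \<Rightarrow> real \<times> real \<Rightarrow> real" where
  "partial i f p = (case p of (x, y) \<Rightarrow>
     (if i = 1 then deriv (\<lambda>t. f (t, y)) x else deriv (\<lambda>t. f (x, t)) y))"

definition Lmat :: "nat \<Rightarrow> nat \<Rightarrow> real mat" where
  "Lmat i n = mat (n + 1) (n + 2) (\<lambda>(r, c). if (if i = 1 then c = r else c = r + 1) then 1 else 0)"

definition Nmat :: "nat \<Rightarrow> nat \<Rightarrow> real mat" where
  "Nmat i n = mat n n (\<lambda>(r, c). if r = c then (if i = 1 then real (n - r) else real (r + 1)) else 0)"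

definition Kmat :: "real \<Rightarrow> real \<Rightarrow> real \<Rightarrow> nat \<Rightarrow> nat \<Rightarrow> real mat" where
  "Kmat a40 a22 a04 i n = mat (n + 1) (n + 1) (\<lambda>(r, c).
     if i = 1 then (if c = r then 4 * a40 else if c = r + 2 then 2 * a22 else 0)
     else (if c = r then 4 * a04 else if r = c + 2 then 2 * a22 else 0))"

end

theory Submission
  imports Defs
begin

text \<open>
  A vector \<open>F\<close> of polynomials of degree at most \<open>M\<close> splits uniquely as \<open>F = X P_M + (lower degree)\<close>,
  since orthonormality recovers \<open>X\<close> by integrating \<open>F\<close> against \<open>P_M\<close>. Inverting
  \<open>P_n = G_n X_n + (lower degree)\<close> gives \<open>X_n = G_n\<^sup>-\<^sup>1 P_n + (lower degree)\<close>, so the exact monomial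
  identities \<open>x_i X_n = L_{n,i} X_{n+1}\<close>, \<open>\<partial>_i X_{n+1} = L_{n,i}\<^sup>T N_{n+1,i} X_n\<close> and
  \<open>(\<partial>_i q) X_n = L_{n,i} L_{n+1,i} L_{n+2,i} K_{n+3,i} X_{n+3} + (lower degree)\<close> determine the leading
  parts of \<open>x_i P_n\<close>, \<open>\<partial>_i P_n\<close> and \<open>(\<partial>_i q) P_n\<close>. Comparing them with the three-term and
  structure relations gives \<open>A_{n,i}\<close> and \<open>B_{n,i}\<close>. For \<open>C\<close>, integration by parts along the
  \<open>i\<close>-th axis (\<open>\<partial>_i W = -(\<partial>_i q) W\<close>, and \<open>\<partial>_i P_{n-3}\<close> has degree \<open>< n\<close>) turns the entry
  \<open>\<integral> \<partial>_i P_{n,j} P_{n-3,l} W\<close> into \<open>\<integral> P_{n,j} (\<partial>_i q) P_{n-3,l} W\<close>, an entry of the leading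
  part of \<open>(\<partial>_i q) P_{n-3}\<close>.
\<close>

lemma mult_mat_vec_index_sum:
  "M \<in> carrier_mat r c \<Longrightarrow> j < r \<Longrightarrow> v \<in> carrier_vec c \<Longrightarrow>
   (M *\<^sub>v v) $ j = (\<Sum>k<c. M $$ (j, k) * v $ k)"
  by (auto simp: scalar_prod_def atLeast0LessThan intro!: sum.cong)

lemma vec_minus_add_cancel: "(v :: real vec) \<in> carrier_vec n \<Longrightarrow> w \<in> carrier_vec n \<Longrightarrow> v - w + w = v"
  by (intro eq_vecI) auto

lemma mult4_mat_vec:
  assumes "A \<in> carrier_mat n\<^sub>1 n\<^sub>2" "B \<in> carrier_mat n\<^sub>2 n\<^sub>3" "C \<in> carrier_mat n\<^sub>3 n\<^sub>4"
    "D \<in> carrier_mat n\<^sub>4 n\<^sub>5" "v \<in> carrier_vec n\<^sub>5"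
  shows "A * B * C * D *\<^sub>v v = A *\<^sub>v (B *\<^sub>v (C *\<^sub>v (D *\<^sub>v v)))"
proof -
  have AB: "A * B \<in> carrier_mat n\<^sub>1 n\<^sub>3" and ABC: "A * B * C \<in> carrier_mat n\<^sub>1 n\<^sub>4"
    using assms by (metis mult_carrier_mat)+
  have "A * B * C * D *\<^sub>v v = A * B * C *\<^sub>v (D *\<^sub>v v)"
    using ABC assms(4,5) by (rule assoc_mult_mat_vec)
  also have "\<dots> = A * B *\<^sub>v (C *\<^sub>v (D *\<^sub>v v))"
    using AB assms(3) mult_mat_vec_carrier[OF assms(4,5)] by (rule assoc_mult_mat_vec)
  also have "\<dots> = A *\<^sub>v (B *\<^sub>v (C *\<^sub>v (D *\<^sub>v v)))"
    using assms(1,2) mult_mat_vec_carrier[OF assms(3) mult_mat_vec_carrier[OF assms(4,5)]]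
    by (rule assoc_mult_mat_vec)
  finally show ?thesis .
qed

lemma mult5_mat_vec:
  assumes "A \<in> carrier_mat n\<^sub>1 n\<^sub>2" "B \<in> carrier_mat n\<^sub>2 n\<^sub>3" "C \<in> carrier_mat n\<^sub>3 n\<^sub>4"
    "D \<in> carrier_mat n\<^sub>4 n\<^sub>5" "E \<in> carrier_mat n\<^sub>5 n\<^sub>6" "v \<in> carrier_vec n\<^sub>6"
  shows "A * B * C * D * E *\<^sub>v v = A *\<^sub>v (B *\<^sub>v (C *\<^sub>v (D *\<^sub>v (E *\<^sub>v v))))"
proof -
  have "A * B * C * D \<in> carrier_mat n\<^sub>1 n\<^sub>5"
    using assms by (metis mult_carrier_mat)
  then have "A * B * C * D * E *\<^sub>v v = A * B * C * D *\<^sub>v (E *\<^sub>v v)"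
    using assms(5,6) by (rule assoc_mult_mat_vec)
  also have "\<dots> = A *\<^sub>v (B *\<^sub>v (C *\<^sub>v (D *\<^sub>v (E *\<^sub>v v))))"
    by (rule mult4_mat_vec[OF assms(1-4) mult_mat_vec_carrier[OF assms(5,6)]])
  finally show ?thesis .
qed

lemma minv_inverse:
  assumes "invertible_mat M" "M \<in> carrier_mat n n"
  shows "minv M \<in> carrier_mat n n" "minv M * M = 1\<^sub>m n" "M * minv M = 1\<^sub>m n"
proof -
  obtain M' where M': "inverts_mat M M'" "inverts_mat M' M"
    using assms(1) unfolding invertible_mat_def by blast
  then have "M' \<in> carrier_mat n n"
    using assms(2) unfolding inverts_mat_def
    by (metis carrier_matD carrier_matI index_mult_mat(2,3) index_one_mat(2,3))
  with M' assms(2) have "\<exists>M'. M' \<in> carrier_mat (dim_row M) (dim_row M) \<and> inverts_mat M M' \<and> inverts_mat M' M"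
    by auto
  from someI_ex[OF this, folded minv_def] assms(2)
  show "minv M \<in> carrier_mat n n" "minv M * M = 1\<^sub>m n" "M * minv M = 1\<^sub>m n"
    unfolding inverts_mat_def by auto
qed

lemma Lmat_carrier: "Lmat i n \<in> carrier_mat (n + 1) (n + 2)"
  unfolding Lmat_def by simp

lemma dim_Lmat [simp]: "dim_row (Lmat i n) = n + 1" "dim_col (Lmat i n) = n + 2"
  unfolding Lmat_def by simp_all

lemma Lmat_index:
  "r < n + 1 \<Longrightarrow> c < n + 2 \<Longrightarrow> Lmat i n $$ (r, c) = (if c = (if i = 1 then r else Suc r) then 1 else 0)"
  unfolding Lmat_def by auto

lemma Lmat_mult_vec:
  assumes "dim_vec v = n + 2" "l \<le> n"
  shows "(Lmat i n *\<^sub>v v) $ l = v $ (if i = 1 then l else Suc l)"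
proof -
  have "(Lmat i n *\<^sub>v v) $ l = (\<Sum>k<n+2. Lmat i n $$ (l, k) * v $ k)"
    using assms by (intro mult_mat_vec_index_sum[OF Lmat_carrier]) (auto intro: carrier_vecI)
  also have "\<dots> = (\<Sum>k<n+2. if k = (if i = 1 then l else Suc l) then v $ k else 0)"
    using assms(2) by (intro sum.cong) (auto simp: Lmat_index)
  finally show ?thesis using assms(2) by (simp add: sum.delta)
qed

lemma Lmat_mult_transpose: "Lmat i n * transpose_mat (Lmat i n) = 1\<^sub>m (n + 1)"
proof (rule eq_matI)
  fix b c assume "b < dim_row (1\<^sub>m (n + 1) :: real mat)" "c < dim_col (1\<^sub>m (n + 1) :: real mat)"
  then have bc: "b < n + 1" "c < n + 1" by simp_all
  have "(Lmat i n * transpose_mat (Lmat i n)) $$ (b, c) = (Lmat i n *\<^sub>v row (Lmat i n) c) $ b"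
    using bc by simp
  also have "\<dots> = Lmat i n $$ (c, if i = 1 then b else Suc b)"
    using bc by (subst Lmat_mult_vec) auto
  also have "\<dots> = 1\<^sub>m (n + 1) $$ (b, c)"
    using bc by (auto simp: Lmat_index)
  finally show "(Lmat i n * transpose_mat (Lmat i n)) $$ (b, c) = 1\<^sub>m (n + 1) $$ (b, c)" .
qed simp_all

lemma transpose_Lmat_mult_vec:
  assumes "dim_vec v = k + 1" "l \<le> k + 1"
  shows "(transpose_mat (Lmat i k) *\<^sub>v v) $ l =
    (if i = 1 then (if l \<le> k then v $ l else 0) else (if l = 0 then 0 else v $ (l - 1)))"
proof -
  have "(transpose_mat (Lmat i k) *\<^sub>v v) $ l = (\<Sum>a<k+1. Lmat i k $$ (a, l) * v $ a)"
    using assms Lmat_carrier[of i k] by (subst mult_mat_vec_index_sum[where c = "k+1"]) (auto intro: carrier_vecI)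
  also have "\<dots> = (\<Sum>a<k+1. if a = (if i = 1 then l else l - 1) \<and> (i = 1 \<or> l \<noteq> 0) then v $ a else 0)"
    using assms(2) by (intro sum.cong) (auto simp: Lmat_index)
  finally show ?thesis using assms(2) by (cases "i = 1") (auto simp: sum.delta)
qed

lemma Nmat_carrier: "Nmat i n \<in> carrier_mat n n"
  unfolding Nmat_def by simp

lemma Nmat_mult_vec:
  assumes "dim_vec v = n"
  shows "Nmat i n *\<^sub>v v = vec n (\<lambda>a. (if i = 1 then real (n - a) else real (a + 1)) * v $ a)"
proof (rule eq_vecI)
  fix a assume "a < dim_vec (vec n (\<lambda>a. (if i = 1 then real (n - a) else real (a + 1)) * v $ a))"
  then have a: "a < n" by simp
  have "(Nmat i n *\<^sub>v v) $ a = (\<Sum>b<n. Nmat i n $$ (a, b) * v $ b)"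
    using a assms by (intro mult_mat_vec_index_sum) (auto simp: Nmat_def intro: carrier_vecI)
  also have "\<dots> = (\<Sum>b<n. if b = a then (if i = 1 then real (n - a) else real (a + 1)) * v $ b else 0)"
    using a by (intro sum.cong) (auto simp: Nmat_def)
  finally show "(Nmat i n *\<^sub>v v) $ a = vec n (\<lambda>a. (if i = 1 then real (n - a) else real (a + 1)) * v $ a) $ a"
    using a by simp
qed (simp add: Nmat_def)

lemma transpose_Lmat_Nmat_mult_vec:
  assumes "dim_vec v = k + 1" "l \<le> k + 1"
  shows "((transpose_mat (Lmat i k) * Nmat i (k + 1)) *\<^sub>v v) $ l =
    (if i = 1 then real (k + 1 - l) * (if l \<le> k then v $ l else 0)
     else real l * (if l = 0 then 0 else v $ (l - 1)))"
proof -
  have "(transpose_mat (Lmat i k) * Nmat i (k + 1)) *\<^sub>v v = transpose_mat (Lmat i k) *\<^sub>v (Nmat i (k + 1) *\<^sub>v v)"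
    using assms Lmat_carrier[of i k]
    by (intro assoc_mult_mat_vec[where n\<^sub>2 = "k+1"]) (auto simp: Nmat_def intro: carrier_vecI)
  then show ?thesis
    using assms by (auto simp: transpose_Lmat_mult_vec Nmat_mult_vec simp del: index_mult_mat_vec)
qed

lemma Kmat_carrier: "Kmat a40 a22 a04 i n \<in> carrier_mat (n + 1) (n + 1)"
  unfolding Kmat_def by simp

lemma dim_Kmat [simp]: "dim_row (Kmat a40 a22 a04 i n) = n + 1" "dim_col (Kmat a40 a22 a04 i n) = n + 1"
  unfolding Kmat_def by simp_all

lemma Kmat_mult_vec:
  assumes "dim_vec v = n + 1" "r \<le> n"
  shows "(Kmat a40 a22 a04 i n *\<^sub>v v) $ r =
    (if i = 1 then 4 * a40 * v $ r + (if r + 2 \<le> n then 2 * a22 * v $ (r + 2) else 0)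
     else 4 * a04 * v $ r + (if 2 \<le> r then 2 * a22 * v $ (r - 2) else 0))"
proof -
  have "(Kmat a40 a22 a04 i n *\<^sub>v v) $ r = (\<Sum>c<n+1. Kmat a40 a22 a04 i n $$ (r, c) * v $ c)"
    using assms by (intro mult_mat_vec_index_sum[OF Kmat_carrier]) (auto intro: carrier_vecI)
  also have "\<dots> = (\<Sum>c<n+1.
      (if c = r then (if i = 1 then 4 * a40 else 4 * a04) * v $ c else 0) +
      (if c = (if i = 1 then r + 2 else r - 2) \<and> (i = 1 \<or> 2 \<le> r) then 2 * a22 * v $ c else 0))"
    using assms(2) by (intro sum.cong) (auto simp: Kmat_def)
  finally show ?thesis
    using assms(2) by (cases "i = 1") (auto simp: sum.distrib sum.delta)
qed

lemma dim_monvec [simp]: "dim_vec (monvec k p) = k + 1"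
  by (simp add: monvec_def split: prod.splits)

lemma monvec_carrier_iff [simp]: "monvec k p \<in> carrier_vec n \<longleftrightarrow> n = k + 1"
  by (metis carrier_vecD carrier_vecI dim_monvec)

lemma monvec_carrier: "monvec k p \<in> carrier_vec (k + 1)"
  by simp

lemma index_monvec: "l \<le> k \<Longrightarrow> monvec k p $ l = fst p ^ (k - l) * snd p ^ l"
  by (simp add: monvec_def split: prod.splits)

lemma monvec_0: "monvec 0 p = vec 1 (\<lambda>_. 1)"
  by (intro eq_vecI) (simp_all add: index_monvec)

lemma coord_monvec: "coord i p \<cdot>\<^sub>v monvec n p = Lmat i n *\<^sub>v monvec (n + 1) p"
proof (rule eq_vecI)
  fix l assume "l < dim_vec (Lmat i n *\<^sub>v monvec (n + 1) p)"
  then have l: "l \<le> n" using Lmat_carrier[of i n] by simp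
  then have "Suc n - l = Suc (n - l)" by simp
  then show "(coord i p \<cdot>\<^sub>v monvec n p) $ l = (Lmat i n *\<^sub>v monvec (n + 1) p) $ l"
    using l by (simp add: Lmat_mult_vec index_monvec coord_def del: index_mult_mat_vec)
qed (use Lmat_carrier[of i n] in simp)

definition freud_dq :: "real \<Rightarrow> real \<Rightarrow> real \<Rightarrow> real \<Rightarrow> real \<Rightarrow> nat \<Rightarrow> real \<times> real \<Rightarrow> real" where
  "freud_dq a40 a22 a04 a20 a02 i p = (case p of (x, y) \<Rightarrow>
     if i = 1 then 4 * a40 * x ^ 3 + 2 * a22 * x * y ^ 2 + 2 * a20 * x
     else 4 * a04 * y ^ 3 + 2 * a22 * x ^ 2 * y + 2 * a02 * y)"

lemma freud_dq_monvec:
  "freud_dq a40 a22 a04 a20 a02 i p \<cdot>\<^sub>v monvec n p =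
     (Lmat i n * Lmat i (n + 1) * Lmat i (n + 2) * Kmat a40 a22 a04 i (n + 3)) *\<^sub>v monvec (n + 3) p
     + (2 * (if i = 1 then a20 else a02) * coord i p) \<cdot>\<^sub>v monvec n p"
    (is "?L = ?K *\<^sub>v _ + ?R")
proof -
  have carriers: "Lmat i (n + 1) \<in> carrier_mat (n + 2) (n + 3)" "Lmat i (n + 2) \<in> carrier_mat (n + 3) (n + 4)"
    "Kmat a40 a22 a04 i (n + 3) \<in> carrier_mat (n + 4) (n + 4)" "monvec (n + 3) p \<in> carrier_vec (n + 4)"
    by (auto intro!: carrier_matI carrier_vecI)
  have "?L $ l = (?K *\<^sub>v monvec (n + 3) p + ?R) $ l" if l: "l \<le> n" for l
  proof -
    obtain d where d: "n = l + d" using l le_Suc_ex by blast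
    show ?thesis
      unfolding mult4_mat_vec[OF Lmat_carrier carriers]
      using l by (cases p) (auto simp: Lmat_mult_vec Kmat_mult_vec index_monvec freud_dq_def coord_def d
          eval_nat_numeral algebra_simps simp del: index_mult_mat_vec)
  qed
  then show ?thesis by (intro eq_vecI) auto
qed

lemma freud_dq_mult_monvec_index:
  assumes G: "Y \<in> carrier_mat r (k + 1)" and j: "j < r"
  shows "freud_dq a40 a22 a04 a20 a02 i p * (Y *\<^sub>v monvec k p) $ j =
    ((Y * Lmat i k * Lmat i (k + 1) * Lmat i (k + 2) * Kmat a40 a22 a04 i (k + 3)) *\<^sub>v monvec (k + 3) p) $ j
    + 2 * (if i = 1 then a20 else a02) * (coord i p * (Y *\<^sub>v monvec k p) $ j)"
proof -
  let ?c = "2 * (if i = 1 then a20 else a02)" and ?dq = "freud_dq a40 a22 a04 a20 a02 i p"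
  let ?K = "Lmat i k * Lmat i (k + 1) * Lmat i (k + 2) * Kmat a40 a22 a04 i (k + 3)"
  have L: "Lmat i k \<in> carrier_mat (k + 1) (k + 2)" "Lmat i (k + 1) \<in> carrier_mat (k + 2) (k + 3)"
    "Lmat i (k + 2) \<in> carrier_mat (k + 3) (k + 4)" "Kmat a40 a22 a04 i (k + 3) \<in> carrier_mat (k + 4) (k + 4)"
    "monvec (k + 3) p \<in> carrier_vec (k + 4)"
    by (auto intro!: carrier_matI carrier_vecI)
  have K: "?K \<in> carrier_mat (k + 1) (k + 4)" using L by (metis mult_carrier_mat)
  have "?dq * (Y *\<^sub>v monvec k p) $ j = (Y *\<^sub>v (?dq \<cdot>\<^sub>v monvec k p)) $ j"
    using j by (simp add: mult_mat_vec[OF G monvec_carrier] carrier_matD[OF G])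
  also have "\<dots> = (Y *\<^sub>v (?K *\<^sub>v monvec (k + 3) p)) $ j + (Y *\<^sub>v ((?c * coord i p) \<cdot>\<^sub>v monvec k p)) $ j"
    unfolding freud_dq_monvec
      mult_add_distrib_mat_vec[OF G mult_mat_vec_carrier[OF K L(5)] smult_carrier_vec[THEN iffD2, OF monvec_carrier]]
    using j by (simp add: carrier_matD[OF G])
  also have "Y *\<^sub>v (?K *\<^sub>v monvec (k + 3) p) =
      (Y * Lmat i k * Lmat i (k + 1) * Lmat i (k + 2) * Kmat a40 a22 a04 i (k + 3)) *\<^sub>v monvec (k + 3) p"
    by (simp only: mult5_mat_vec[OF G L] mult4_mat_vec[OF L])
  also have "(Y *\<^sub>v ((?c * coord i p) \<cdot>\<^sub>v monvec k p)) $ j = ?c * (coord i p * (Y *\<^sub>v monvec k p) $ j)"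
    using j by (simp add: mult_mat_vec[OF G monvec_carrier] carrier_matD[OF G])
  finally show ?thesis .
qed

section \<open>Partial derivatives along the axes\<close>

text \<open>As in \<open>coord\<close> and \<open>partial\<close>, every index \<open>i \<noteq> 1\<close> denotes the \<open>y\<close>-direction, so
  the lemmas below need no hypothesis \<open>i \<in> {1, 2}\<close>.\<close>

definition axis_line :: "nat \<Rightarrow> real \<times> real \<Rightarrow> real \<Rightarrow> real \<times> real" where
  "axis_line i p t = (if i = 1 then (t, snd p) else (fst p, t))"

lemma axis_line_coord [simp]: "axis_line i p (coord i p) = p"
  by (simp add: axis_line_def coord_def)

definition has_partial :: "nat \<Rightarrow> (real \<times> real \<Rightarrow> real) \<Rightarrow> (real \<times> real \<Rightarrow> real) \<Rightarrow> bool" where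
  "has_partial i f f' \<longleftrightarrow> (\<forall>p. ((\<lambda>t. f (axis_line i p t)) has_real_derivative f' p) (at (coord i p)))"

lemma has_partialD: "has_partial i f f' \<Longrightarrow> ((\<lambda>t. f (axis_line i p t)) has_real_derivative f' p) (at (coord i p))"
  unfolding has_partial_def by blast

lemma has_partial_imp_partial: "has_partial i f f' \<Longrightarrow> partial i f p = f' p"
  using has_partialD[of i f f' p]
  by (cases p; cases "i = 1") (auto simp: partial_def axis_line_def coord_def dest: DERIV_imp_deriv)

lemma has_partial_const: "has_partial i (\<lambda>p. c) (\<lambda>p. 0)"
  by (simp add: has_partial_def)

lemma has_partial_add:
  assumes "has_partial i f f'" "has_partial i g g'"
  shows "has_partial i (\<lambda>p. f p + g p) (\<lambda>p. f' p + g' p)"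
  unfolding has_partial_def by (auto intro!: DERIV_add[OF has_partialD[OF assms(1)] has_partialD[OF assms(2)]])

lemma has_partial_mult:
  assumes "has_partial i f f'" "has_partial i g g'"
  shows "has_partial i (\<lambda>p. f p * g p) (\<lambda>p. f' p * g p + f p * g' p)"
  unfolding has_partial_def
  by (auto intro!: DERIV_mult[OF has_partialD[OF assms(1)] has_partialD[OF assms(2)], THEN DERIV_cong])

lemma has_partial_cmult:
  assumes "has_partial i f f'"
  shows "has_partial i (\<lambda>p. c * f p) (\<lambda>p. c * f' p)"
  unfolding has_partial_def by (auto intro!: DERIV_cmult[OF has_partialD[OF assms]])

lemma has_partial_sum:
  "finite S \<Longrightarrow> (\<And>s. s \<in> S \<Longrightarrow> has_partial i (f s) (f' s)) \<Longrightarrow>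
   has_partial i (\<lambda>p. \<Sum>s\<in>S. f s p) (\<lambda>p. \<Sum>s\<in>S. f' s p)"
  by (induction S rule: finite_induct) (auto intro: has_partial_const has_partial_add)

lemma has_partial_exp:
  assumes "has_partial i f f'"
  shows "has_partial i (\<lambda>p. exp (f p)) (\<lambda>p. exp (f p) * f' p)"
  unfolding has_partial_def
  by (auto intro!: DERIV_fun_exp[OF has_partialD[OF assms], THEN DERIV_cong])

lemma has_partial_along_line:
  assumes "has_partial i f f'"
  shows "((\<lambda>u. f (p + u *\<^sub>R (if i = 1 then (1, 0) else (0, 1)))) has_real_derivative
      f' (p + t *\<^sub>R (if i = 1 then (1, 0) else (0, 1)))) (at t)"
proof (cases p)
  case (Pair x y)
  show ?thesis
  proof (cases "i = 1")
    case True
    have "((\<lambda>s. f (s, y)) has_real_derivative f' (t + x, y)) (at (t + x))"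
      using has_partialD[OF assms, of "(t + x, y)"] True by (simp add: axis_line_def coord_def)
    then show ?thesis using True Pair by (simp add: DERIV_shift add.commute)
  next
    case False
    have "((\<lambda>s. f (x, s)) has_real_derivative f' (x, t + y)) (at (t + y))"
      using has_partialD[OF assms, of "(x, t + y)"] False by (simp add: axis_line_def coord_def)
    then show ?thesis using False Pair by (simp add: DERIV_shift add.commute)
  qed
qed

lemma has_partial_mult_mat_vec:
  fixes F F' :: "real \<times> real \<Rightarrow> real vec"
  assumes "Y \<in> carrier_mat r c" "j < r" "\<And>p. F p \<in> carrier_vec c" "\<And>p. F' p \<in> carrier_vec c"
    and "\<And>l. l < c \<Longrightarrow> has_partial i (\<lambda>p. F p $ l) (\<lambda>p. F' p $ l)"
  shows "has_partial i (\<lambda>p. (Y *\<^sub>v F p) $ j) (\<lambda>p. (Y *\<^sub>v F' p) $ j)"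
proof -
  have sum: "(\<lambda>p. (Y *\<^sub>v G p) $ j) = (\<lambda>p. \<Sum>l<c. Y $$ (j, l) * G p $ l)"
    if "\<And>p. G p \<in> carrier_vec c" for G
    by (rule ext, rule mult_mat_vec_index_sum[OF assms(1,2) that])
  show ?thesis
    unfolding sum[of F, OF assms(3)] sum[of F', OF assms(4)]
    using assms(5) by (intro has_partial_sum has_partial_cmult) auto
qed

lemma has_partial_monvec:
  assumes "l \<le> k + 1"
  shows "has_partial i (\<lambda>p. monvec (k + 1) p $ l)
    (\<lambda>p. ((transpose_mat (Lmat i k) * Nmat i (k + 1)) *\<^sub>v monvec k p) $ l)"
proof -
  have "has_partial i (\<lambda>p. fst p ^ (k + 1 - l) * snd p ^ l)
     (\<lambda>p. if i = 1 then real (k + 1 - l) * fst p ^ (k - l) * snd p ^ l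
          else real l * fst p ^ (k + 1 - l) * snd p ^ (l - 1))"
    using assms unfolding has_partial_def axis_line_def coord_def
    by (cases "i = 1") (auto intro!: derivative_eq_intros simp: Suc_diff_le)
  moreover have "(\<lambda>p. monvec (k + 1) p $ l) = (\<lambda>p. fst p ^ (k + 1 - l) * snd p ^ l)"
    using assms by (simp add: index_monvec)
  moreover have "(\<lambda>p. ((transpose_mat (Lmat i k) * Nmat i (k + 1)) *\<^sub>v monvec k p) $ l) =
     (\<lambda>p. if i = 1 then real (k + 1 - l) * fst p ^ (k - l) * snd p ^ l
          else real l * fst p ^ (k + 1 - l) * snd p ^ (l - 1))"
  proof
    fix p
    have "k - (l - 1) = k + 1 - l" if "l \<noteq> 0" using that assms by simp
    then show "((transpose_mat (Lmat i k) * Nmat i (k + 1)) *\<^sub>v monvec k p) $ l =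
      (if i = 1 then real (k + 1 - l) * fst p ^ (k - l) * snd p ^ l
       else real l * fst p ^ (k + 1 - l) * snd p ^ (l - 1))"
      unfolding transpose_Lmat_Nmat_mult_vec[OF dim_monvec assms]
      using assms by (auto simp: index_monvec)
  qed
  ultimately show ?thesis by simp
qed

lemma has_partial_freud_q:
  "has_partial i (freud_q a40 a22 a04 a20 a02) (freud_dq a40 a22 a04 a20 a02 i)"
  unfolding has_partial_def
proof
  fix p :: "real \<times> real"
  obtain x y where p: "p = (x, y)" by fastforce
  show "((\<lambda>t. freud_q a40 a22 a04 a20 a02 (axis_line i p t)) has_real_derivative
      freud_dq a40 a22 a04 a20 a02 i p) (at (coord i p))"
  proof (cases "i = 1")
    case True
    have "((\<lambda>t. a40 * t ^ 4 + a22 * t\<^sup>2 * y\<^sup>2 + a04 * y ^ 4 + a20 * t\<^sup>2 + a02 * y\<^sup>2)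
        has_real_derivative 4 * a40 * x ^ 3 + 2 * a22 * x * y\<^sup>2 + 2 * a20 * x) (at x)"
      by (auto intro!: derivative_eq_intros simp: algebra_simps power2_eq_square power3_eq_cube)
    then show ?thesis using True by (simp add: p axis_line_def coord_def freud_q_def freud_dq_def)
  next
    case False
    have "((\<lambda>t. a40 * x ^ 4 + a22 * x\<^sup>2 * t\<^sup>2 + a04 * t ^ 4 + a20 * x\<^sup>2 + a02 * t\<^sup>2)
        has_real_derivative 4 * a04 * y ^ 3 + 2 * a22 * x\<^sup>2 * y + 2 * a02 * y) (at y)"
      by (auto intro!: derivative_eq_intros simp: algebra_simps power2_eq_square power3_eq_cube)
    then show ?thesis using False by (simp add: p axis_line_def coord_def freud_q_def freud_dq_def)
  qed
qed

lemma has_partial_freud_W: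
  "has_partial i (freud_W a40 a22 a04 a20 a02)
     (\<lambda>p. freud_W a40 a22 a04 a20 a02 p * - freud_dq a40 a22 a04 a20 a02 i p)"
  using has_partial_exp[OF has_partial_cmult[OF has_partial_freud_q, where c = "- 1"]]
  by (simp add: freud_W_def[abs_def])

section \<open>Integrals of derivatives along lines\<close>

lemma lborel_integral_translate:
  fixes f :: "'a::euclidean_space \<Rightarrow> real"
  assumes "integrable lborel f"
  shows "integrable lborel (\<lambda>p. f (c + p))" "(\<integral>p. f (c + p) \<partial>lborel) = integral\<^sup>L lborel f"
proof -
  have f: "f \<in> borel_measurable borel" using borel_measurable_integrable[OF assms] by simp
  have c: "(+) c \<in> measurable lborel borel" by simp
  show "integrable lborel (\<lambda>p. f (c + p))"
    using assms integrable_distr_eq[OF c f] by (simp add: lborel_distr_plus)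
  show "(\<integral>p. f (c + p) \<partial>lborel) = integral\<^sup>L lborel f"
    using integral_distr[OF c f] by (simp add: lborel_distr_plus)
qed

definition segment_sweep :: "'a::euclidean_space \<Rightarrow> ('a \<Rightarrow> real) \<Rightarrow> real \<times> 'a \<Rightarrow> real" where
  "segment_sweep e g = (\<lambda>(t, p). indicator {0..1} t * g (p + t *\<^sub>R e))"

lemma segment_sweep_measurable:
  fixes g :: "'a::euclidean_space \<Rightarrow> real"
  assumes "g \<in> borel_measurable lborel"
  shows "segment_sweep e g \<in> borel_measurable (lborel \<Otimes>\<^sub>M lborel)"
proof -
  have "(\<lambda>x::real \<times> 'a. snd x + fst x *\<^sub>R e) \<in> borel_measurable borel"
    by (intro borel_measurable_continuous_onI continuous_intros)
  from measurable_compose[OF this] assms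
  have g_meas: "(\<lambda>x::real \<times> 'a. g (snd x + fst x *\<^sub>R e)) \<in> borel_measurable borel"
    by simp
  have "(\<lambda>x. indicator {0..1} (fst x) :: real) = indicator ({0..1::real} \<times> (UNIV :: 'a set))"
    by (auto simp: fun_eq_iff indicator_def)
  then have "(\<lambda>x::real \<times> 'a. indicator {0..1} (fst x) :: real) \<in> borel_measurable borel"
    by (simp only:) (intro borel_measurable_indicator borel_closed closed_Times; simp)
  from this g_meas
  have "(\<lambda>x. indicator {0..1} (fst x) * g (snd x + fst x *\<^sub>R e)) \<in> borel_measurable borel"
    by (rule borel_measurable_times)
  then show ?thesis unfolding segment_sweep_def lborel_prod by (simp add: case_prod_beta')
qed

lemma segment_sweep_integral:
  fixes g :: "'a::euclidean_space \<Rightarrow> real"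
  assumes g: "integrable lborel g"
  shows "integrable (lborel \<Otimes>\<^sub>M lborel) (segment_sweep e g)"
    and "integral\<^sup>L (lborel \<Otimes>\<^sub>M lborel) (segment_sweep e g) = integral\<^sup>L lborel g"
proof -
  have slice: "(\<integral>p. segment_sweep e g (t, p) \<partial>lborel) = indicator {0..1} t * integral\<^sup>L lborel g" for t
    using lborel_integral_translate(2)[OF g, of "t *\<^sub>R e"] by (simp add: segment_sweep_def add.commute)
  have slice_abs: "(\<integral>p. \<bar>segment_sweep e g (t, p)\<bar> \<partial>lborel) = indicator {0..1} t * (\<integral>p. \<bar>g p\<bar> \<partial>lborel)" for t
    using lborel_integral_translate(2)[of "\<lambda>p. \<bar>g p\<bar>" "t *\<^sub>R e"] g
    by (simp add: segment_sweep_def add.commute abs_mult)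
  have "integrable lborel (\<lambda>t. indicator {0..1::real} t * (\<integral>p. \<bar>g p\<bar> \<partial>lborel))"
    using integrable_real_indicator[of "{0..1::real}" lborel] by simp
  moreover have "integrable lborel (\<lambda>p. segment_sweep e g (t, p))" for t
    using lborel_integral_translate(1)[OF g, of "t *\<^sub>R e"] by (simp add: segment_sweep_def add.commute)
  ultimately show sweep_int: "integrable (lborel \<Otimes>\<^sub>M lborel) (segment_sweep e g)"
    using segment_sweep_measurable[OF borel_measurable_integrable[OF g]]
    by (intro lborel_pair.Fubini_integrable) (simp_all add: slice_abs)
  show "integral\<^sup>L (lborel \<Otimes>\<^sub>M lborel) (segment_sweep e g) = integral\<^sup>L lborel g"
    using lborel_pair.integral_fst'[OF sweep_int] by (simp add: slice)
qed

text \<open>Integrating the fundamental theorem of calculus on the segments \<open>[p, p + e]\<close> over all \<open>p\<close>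
  gives \<open>\<integral>h' = \<integral>(h(p + e) - h p) dp\<close>, which vanishes by translation invariance; Fubini's theorem
  only provides integrability of \<open>h'\<close> on almost every segment.\<close>

lemma integral_line_derivative_eq_0:
  fixes h h' :: "'a::euclidean_space \<Rightarrow> real"
  assumes h: "integrable lborel h" and h': "integrable lborel h'"
    and deriv: "\<And>p t. ((\<lambda>u. h (p + u *\<^sub>R e)) has_real_derivative h' (p + t *\<^sub>R e)) (at t)"
  shows "integral\<^sup>L lborel h' = 0"
proof -
  let ?f = "segment_sweep e h'"
  have f_int: "integrable (lborel \<Otimes>\<^sub>M lborel) (\<lambda>(t, p). ?f (t, p))"
    using segment_sweep_integral(1)[OF h'] by simp
  have "AE p in lborel. (\<integral>t. ?f (t, p) \<partial>lborel) = h (e + p) - h p"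
    using lborel_pair.AE_integrable_snd[OF f_int]
  proof (rule AE_mp, intro AE_I2 impI)
    fix p assume "integrable lborel (\<lambda>t. ?f (t, p))"
    then have "set_integrable lborel {0..1} (\<lambda>t. h' (p + t *\<^sub>R e))"
      by (simp add: set_integrable_def segment_sweep_def mult.commute)
    then have "(LINT t:{0..1}|lborel. h' (p + t *\<^sub>R e)) = integral {0..1} (\<lambda>t. h' (p + t *\<^sub>R e))"
      by (rule set_borel_integral_eq_integral(2))
    moreover have "(\<integral>t. ?f (t, p) \<partial>lborel) = (LINT t:{0..1}|lborel. h' (p + t *\<^sub>R e))"
      by (simp add: set_lebesgue_integral_def segment_sweep_def)
    moreover have "((\<lambda>t. h' (p + t *\<^sub>R e)) has_integral (h (p + 1 *\<^sub>R e) - h (p + 0 *\<^sub>R e))) {0..1}"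
    proof (rule fundamental_theorem_of_calculus)
      show "((\<lambda>u. h (p + u *\<^sub>R e)) has_vector_derivative h' (p + t *\<^sub>R e)) (at t within {0..1})" for t
        using deriv[of p t] unfolding has_real_derivative_iff_has_vector_derivative
        by (rule has_vector_derivative_at_within)
    qed simp
    ultimately show "(\<integral>t. ?f (t, p) \<partial>lborel) = h (e + p) - h p"
      by (simp add: integral_unique add.commute)
  qed
  moreover have "(\<lambda>p. \<integral>t. ?f (t, p) \<partial>lborel) \<in> borel_measurable lborel"
    using segment_sweep_measurable[OF borel_measurable_integrable[OF h'], of e] measurable_pair_swap_iff
    by (intro lborel.borel_measurable_lebesgue_integral) blast
  moreover have "(\<lambda>p. h (e + p) - h p) \<in> borel_measurable lborel"
    using lborel_integral_translate(1)[OF h, of e] h by (intro borel_measurable_diff) simp_all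
  ultimately have "(\<integral>p. (\<integral>t. ?f (t, p) \<partial>lborel) \<partial>lborel) = (\<integral>p. h (e + p) - h p \<partial>lborel)"
    by (intro integral_cong_AE) simp_all
  also have "\<dots> = 0"
    using lborel_integral_translate[OF h] h by simp
  finally show ?thesis
    using lborel_pair.integral_snd[OF f_int] segment_sweep_integral(2)[OF h'] by simp
qed

section \<open>Leading parts with respect to an orthonormal system\<close>

locale orthonormal_polys =
  fixes W :: "real \<times> real \<Rightarrow> real" and Gc :: "nat \<Rightarrow> nat \<Rightarrow> real mat"
  assumes ons: "orthonormal_system W Gc"
begin

abbreviation P :: "nat \<Rightarrow> nat \<Rightarrow> real \<times> real \<Rightarrow> real" where
  "P \<equiv> polyP Gc"

lemma Gc_carrier: "k \<le> n \<Longrightarrow> Gc n k \<in> carrier_mat (n + 1) (k + 1)"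
  using ons unfolding orthonormal_system_def by blast

lemma Gc_diag_carrier: "Gc n n \<in> carrier_mat (n + 1) (n + 1)"
  by (rule Gc_carrier) simp

lemma Gc_inverse:
  "minv (Gc n n) \<in> carrier_mat (n + 1) (n + 1)"
  "minv (Gc n n) * Gc n n = 1\<^sub>m (n + 1)" "Gc n n * minv (Gc n n) = 1\<^sub>m (n + 1)"
  using minv_inverse[of "Gc n n" "n + 1"] ons Gc_carrier[of n n] unfolding orthonormal_system_def by auto

lemma polyP_orthonormal:
  "j \<le> n \<Longrightarrow> l \<le> m \<Longrightarrow>
   has_bochner_integral lborel (\<lambda>p. P n j p * P m l p * W p) (if n = m \<and> j = l then 1 else 0)"
  using ons unfolding orthonormal_system_def by blast

lemma polyvec_carrier: "polyvec Gc n p \<in> carrier_vec (n + 1)"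
  by (simp add: polyvec_def)

lemma index_polyvec: "j \<le> n \<Longrightarrow> polyvec Gc n p $ j = P n j p"
  by (simp add: polyvec_def)

text \<open>\<open>lower M f\<close>: \<open>f\<close> lies in the span of the \<open>P m k\<close> with \<open>m < M\<close>; since the \<open>G_m\<close> are
  invertible, these are exactly the polynomials of total degree less than \<open>M\<close>.\<close>

inductive lower :: "nat \<Rightarrow> (real \<times> real \<Rightarrow> real) \<Rightarrow> bool" for M where
  lower_zero: "lower M (\<lambda>p. 0)"
| lower_add_P: "m < M \<Longrightarrow> k \<le> m \<Longrightarrow> lower M f \<Longrightarrow> lower M (\<lambda>p. f p + c * P m k p)"

lemma lower_P: "m < M \<Longrightarrow> k \<le> m \<Longrightarrow> lower M (P m k)"
  using lower_add_P[OF _ _ lower_zero, of m M k 1] by simp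

lemma lower_add:
  assumes "lower M f" "lower M g"
  shows "lower M (\<lambda>p. f p + g p)"
  using assms(2)
proof (induction g rule: lower.induct)
  case (lower_add_P m k g c)
  then show ?case using lower.lower_add_P[of m M k "\<lambda>p. f p + g p" c] by (simp add: add.assoc)
qed (simp add: assms(1))

lemma lower_cmult: "lower M f \<Longrightarrow> lower M (\<lambda>p. c * f p)"
proof (induction f rule: lower.induct)
  case (lower_add_P m k f c')
  then show ?case using lower.lower_add_P[of m M k "\<lambda>p. c * f p" "c * c'"] by (simp add: algebra_simps)
qed (simp add: lower_zero)

lemma lower_sum: "finite S \<Longrightarrow> (\<And>s. s \<in> S \<Longrightarrow> lower M (f s)) \<Longrightarrow> lower M (\<lambda>p. \<Sum>s\<in>S. f s p)"
  by (induction S rule: finite_induct) (auto intro: lower_zero lower_add)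

lemma lower_mono: "lower M f \<Longrightarrow> M \<le> M' \<Longrightarrow> lower M' f"
  by (induction f rule: lower.induct) (auto intro: lower.intros)

lemma lower_integral: "lower n f \<Longrightarrow> j \<le> n \<Longrightarrow> has_bochner_integral lborel (\<lambda>p. f p * P n j p * W p) 0"
proof (induction f rule: lower.induct)
  case (lower_add_P m k f c)
  have "has_bochner_integral lborel (\<lambda>p. f p * P n j p * W p + c * (P m k p * P n j p * W p)) (0 + c * 0)"
    using lower_add_P polyP_orthonormal[of k m j n]
    by (intro has_bochner_integral_add has_bochner_integral_mult_right) auto
  then show ?case by (simp add: algebra_simps)
qed (simp add: has_bochner_integral_zero)

lemma lower_P_integrable: "lower M f \<Longrightarrow> l \<le> m \<Longrightarrow> integrable lborel (\<lambda>p. f p * P m l p * W p)"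
proof (induction f rule: lower.induct)
  case (lower_add_P m' k f c)
  have "integrable lborel (\<lambda>p. P m' k p * P m l p * W p)"
    using lower_add_P.hyps polyP_orthonormal[of k m' l m] lower_add_P.prems by (blast intro: integrable.intros)
  then have "integrable lborel (\<lambda>p. f p * P m l p * W p + c * (P m' k p * P m l p * W p))"
    using lower_add_P.IH[OF lower_add_P.prems] by (intro Bochner_Integration.integrable_add integrable_mult_right)
  then show ?case by (simp add: algebra_simps)
qed simp

lemma lower_mult_integrable: "lower M' g \<Longrightarrow> lower M f \<Longrightarrow> integrable lborel (\<lambda>p. f p * g p * W p)"
proof (induction g rule: lower.induct)
  case (lower_add_P m k g c)
  have "integrable lborel (\<lambda>p. f p * P m k p * W p)"
    using lower_P_integrable[OF lower_add_P.prems lower_add_P.hyps(2)] .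
  then have "integrable lborel (\<lambda>p. f p * g p * W p + c * (f p * P m k p * W p))"
    using lower_add_P.IH[OF lower_add_P.prems] by (intro Bochner_Integration.integrable_add integrable_mult_right)
  then show ?case by (simp add: algebra_simps)
qed simp

definition lower_vec :: "nat \<Rightarrow> (real \<times> real \<Rightarrow> real vec) \<Rightarrow> nat \<Rightarrow> bool" where
  "lower_vec M F r \<longleftrightarrow> (\<forall>p. F p \<in> carrier_vec r) \<and> (\<forall>j<r. lower M (\<lambda>p. F p $ j))"

lemma lower_vecI:
  "(\<And>p. F p \<in> carrier_vec r) \<Longrightarrow> (\<And>j. j < r \<Longrightarrow> lower M (\<lambda>p. F p $ j)) \<Longrightarrow> lower_vec M F r"
  unfolding lower_vec_def by blast

lemma lower_vecD:
  "lower_vec M F r \<Longrightarrow> F p \<in> carrier_vec r"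
  "lower_vec M F r \<Longrightarrow> j < r \<Longrightarrow> lower M (\<lambda>p. F p $ j)"
  unfolding lower_vec_def by blast+

lemma lower_vec_zero: "lower_vec M (\<lambda>p. 0\<^sub>v r) r"
  by (rule lower_vecI) (simp_all add: lower_zero)

lemma lower_vec_add:
  assumes "lower_vec M F r" "lower_vec M G r"
  shows "lower_vec M (\<lambda>p. F p + G p) r"
proof (rule lower_vecI)
  show "F p + G p \<in> carrier_vec r" for p
    by (intro add_carrier_vec lower_vecD(1)[OF assms(1)] lower_vecD(1)[OF assms(2)])
  fix j assume "j < r"
  then show "lower M (\<lambda>p. (F p + G p) $ j)"
    using lower_add[OF lower_vecD(2)[OF assms(1) \<open>j < r\<close>] lower_vecD(2)[OF assms(2) \<open>j < r\<close>]]
    by (simp add: carrier_vecD[OF lower_vecD(1)[OF assms(2)]])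
qed

lemma lower_vec_swap_diff:
  assumes "lower_vec M (\<lambda>p. F p - G p) r" "\<And>p. F p \<in> carrier_vec r" "\<And>p. G p \<in> carrier_vec r"
  shows "lower_vec M (\<lambda>p. G p - F p) r"
proof (rule lower_vecI)
  fix j assume j: "j < r"
  then show "lower M (\<lambda>p. (G p - F p) $ j)"
    using lower_cmult[OF lower_vecD(2)[OF assms(1) j], of "- 1"]
    by (simp add: carrier_vecD[OF assms(2)] carrier_vecD[OF assms(3)])
qed (use assms(2,3) in simp)

lemma lower_vec_mult:
  fixes F :: "real \<times> real \<Rightarrow> real vec"
  assumes "lower_vec M F c" "Y \<in> carrier_mat r c"
  shows "lower_vec M (\<lambda>p. Y *\<^sub>v F p) r"
proof (rule lower_vecI)
  show "Y *\<^sub>v F p \<in> carrier_vec r" for p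
    using mult_mat_vec_carrier[OF assms(2) lower_vecD(1)[OF assms(1)]] .
  fix j assume "j < r"
  then have "(\<lambda>p. (Y *\<^sub>v F p) $ j) = (\<lambda>p. \<Sum>k<c. Y $$ (j, k) * F p $ k)"
    using assms lower_vecD(1) by (intro ext mult_mat_vec_index_sum) blast+
  moreover have "lower M (\<lambda>p. \<Sum>k<c. Y $$ (j, k) * F p $ k)"
    using lower_vecD(2)[OF assms(1)] by (intro lower_sum lower_cmult) auto
  ultimately show "lower M (\<lambda>p. (Y *\<^sub>v F p) $ j)" by simp
qed

lemma lower_vec_mono:
  assumes "lower_vec M F r" "M \<le> M'"
  shows "lower_vec M' F r"
  by (intro lower_vecI lower_mono[OF lower_vecD(2)[OF assms(1)] assms(2)] lower_vecD(1)[OF assms(1)])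

lemma lower_vec_polyvec:
  assumes "m < M" "Y \<in> carrier_mat r (m + 1)"
  shows "lower_vec M (\<lambda>p. Y *\<^sub>v polyvec Gc m p) r"
proof (rule lower_vec_mult[OF lower_vecI assms(2)])
  show "lower M (\<lambda>p. polyvec Gc m p $ j)" if "j < m + 1" for j
    using that assms(1) by (simp add: index_polyvec lower_P)
qed (rule polyvec_carrier)

lemma polyvec_integral:
  assumes "Y \<in> carrier_mat r (m + 1)" "j < r" "k \<le> n"
  shows "has_bochner_integral lborel (\<lambda>p. (Y *\<^sub>v polyvec Gc m p) $ j * P n k p * W p)
    (if m = n then Y $$ (j, k) else 0)"
proof -
  have "has_bochner_integral lborel (\<lambda>p. \<Sum>l\<le>m. Y $$ (j, l) * (P m l p * P n k p * W p))
      (\<Sum>l\<le>m. Y $$ (j, l) * (if m = n \<and> l = k then 1 else 0))"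
    using assms polyP_orthonormal by (intro has_bochner_integral_sum has_bochner_integral_mult_right) auto
  moreover have "(\<Sum>l\<le>m. Y $$ (j, l) * (if m = n \<and> l = k then 1 else 0)) = (if m = n then Y $$ (j, k) else 0)"
    using assms(3) by (auto simp: if_distrib[of "\<lambda>x. _ * x"] cong: if_cong)
  moreover have "(Y *\<^sub>v polyvec Gc m p) $ j * P n k p * W p = (\<Sum>l\<le>m. Y $$ (j, l) * (P m l p * P n k p * W p))" for p
  proof -
    have "(Y *\<^sub>v polyvec Gc m p) $ j = (\<Sum>l\<le>m. Y $$ (j, l) * P m l p)"
      unfolding mult_mat_vec_index_sum[OF assms(1,2) polyvec_carrier] lessThan_Suc_atMost[symmetric, unfolded Suc_eq_plus1]
      by (intro sum.cong) (auto simp: index_polyvec)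
    then show ?thesis by (simp add: sum_distrib_right mult.assoc)
  qed
  ultimately show ?thesis by simp
qed

definition has_leading_part :: "nat \<Rightarrow> (real \<times> real \<Rightarrow> real vec) \<Rightarrow> real mat \<Rightarrow> bool" where
  "has_leading_part M F X \<longleftrightarrow> dim_col X = M + 1 \<and> (\<forall>p. F p \<in> carrier_vec (dim_row X)) \<and>
     lower_vec M (\<lambda>p. F p - X *\<^sub>v polyvec Gc M p) (dim_row X)"

lemma has_leading_partI:
  "X \<in> carrier_mat r (M + 1) \<Longrightarrow> (\<And>p. F p \<in> carrier_vec r) \<Longrightarrow>
   lower_vec M (\<lambda>p. F p - X *\<^sub>v polyvec Gc M p) r \<Longrightarrow> has_leading_part M F X"
  unfolding has_leading_part_def by blast

lemma has_leading_partD: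
  assumes "has_leading_part M F X"
  shows "X \<in> carrier_mat (dim_row X) (M + 1)" "F p \<in> carrier_vec (dim_row X)"
    "lower_vec M (\<lambda>p. F p - X *\<^sub>v polyvec Gc M p) (dim_row X)"
  using assms unfolding has_leading_part_def by (blast intro: carrier_matI)+

lemma has_leading_part_polyvec:
  assumes "X \<in> carrier_mat r (M + 1)" "lower_vec M R r"
  shows "has_leading_part M (\<lambda>p. X *\<^sub>v polyvec Gc M p + R p) X"
proof (rule has_leading_partI[OF assms(1)])
  have "X *\<^sub>v polyvec Gc M p + R p - X *\<^sub>v polyvec Gc M p = R p" for p
    using assms lower_vecD(1)[OF assms(2), of p] by (intro eq_vecI) auto
  then show "lower_vec M (\<lambda>p. X *\<^sub>v polyvec Gc M p + R p - X *\<^sub>v polyvec Gc M p) r"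
    using assms(2) by simp
qed (rule add_carrier_vec[OF mult_mat_vec_carrier[OF assms(1) polyvec_carrier] lower_vecD(1)[OF assms(2)]])

lemma has_leading_part_cong_lower:
  assumes "has_leading_part M F X" "lower_vec M (\<lambda>p. G p - F p) (dim_row X)"
    and "\<And>p. G p \<in> carrier_vec (dim_row X)"
  shows "has_leading_part M G X"
proof (rule has_leading_partI[OF has_leading_partD(1)[OF assms(1)] assms(3)])
  have "G p - X *\<^sub>v polyvec Gc M p = (G p - F p) + (F p - X *\<^sub>v polyvec Gc M p)" for p
    using assms(3)[of p] has_leading_partD(2)[OF assms(1), of p] by (intro eq_vecI) auto
  then show "lower_vec M (\<lambda>p. G p - X *\<^sub>v polyvec Gc M p) (dim_row X)"
    using lower_vec_add[OF assms(2) has_leading_partD(3)[OF assms(1)]] by simp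
qed

lemma has_leading_part_mult:
  assumes "has_leading_part M F X" "Y \<in> carrier_mat r (dim_row X)"
  shows "has_leading_part M (\<lambda>p. Y *\<^sub>v F p) (Y * X)"
proof (rule has_leading_partI)
  note X = has_leading_partD(1)[OF assms(1)] and F = has_leading_partD(2)[OF assms(1)]
  show "Y * X \<in> carrier_mat r (M + 1)" by (rule mult_carrier_mat[OF assms(2) X])
  show "Y *\<^sub>v F p \<in> carrier_vec r" for p by (rule mult_mat_vec_carrier[OF assms(2) F])
  have "Y *\<^sub>v F p - Y * X *\<^sub>v polyvec Gc M p = Y *\<^sub>v (F p - X *\<^sub>v polyvec Gc M p)" for p
    by (simp only: assoc_mult_mat_vec[OF assms(2) X polyvec_carrier]
        mult_minus_distrib_mat_vec[OF assms(2) F mult_mat_vec_carrier[OF X polyvec_carrier]])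
  then show "lower_vec M (\<lambda>p. Y *\<^sub>v F p - Y * X *\<^sub>v polyvec Gc M p) r"
    using lower_vec_mult[OF has_leading_partD(3)[OF assms(1)] assms(2)] by simp
qed

lemma has_leading_part_lower:
  assumes "has_leading_part M F X"
  shows "lower_vec (M + 1) F (dim_row X)"
proof -
  note X = has_leading_partD(1)[OF assms] and F = has_leading_partD(2)[OF assms]
  have "(\<lambda>p. (F p - X *\<^sub>v polyvec Gc M p) + X *\<^sub>v polyvec Gc M p) = F"
    by (rule ext, rule vec_minus_add_cancel[OF F mult_mat_vec_carrier[OF X polyvec_carrier]])
  then show ?thesis
    using lower_vec_add[OF lower_vec_mono[OF has_leading_partD(3)[OF assms], of "M + 1"]
        lower_vec_polyvec[of M "M + 1", OF _ X]]
    by simp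
qed

lemma has_leading_part_integral:
  assumes "has_leading_part M F X" "j < dim_row X" "k \<le> M"
  shows "has_bochner_integral lborel (\<lambda>p. F p $ j * P M k p * W p) (X $$ (j, k))"
proof -
  note X = has_leading_partD(1)[OF assms(1)] and F = has_leading_partD(2)[OF assms(1)]
  have "has_bochner_integral lborel (\<lambda>p. (F p - X *\<^sub>v polyvec Gc M p) $ j * P M k p * W p
      + (X *\<^sub>v polyvec Gc M p) $ j * P M k p * W p) (0 + X $$ (j, k))"
    using lower_integral[OF lower_vecD(2)[OF has_leading_partD(3)[OF assms(1)] assms(2)] assms(3)]
      polyvec_integral[OF X assms(2,3)]
    by (intro has_bochner_integral_add) auto
  moreover have "(\<lambda>p. (F p - X *\<^sub>v polyvec Gc M p) $ j * P M k p * W p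
      + (X *\<^sub>v polyvec Gc M p) $ j * P M k p * W p) = (\<lambda>p. F p $ j * P M k p * W p)"
    using assms(2) by (intro ext) (simp add: algebra_simps)
  ultimately show ?thesis by simp
qed

lemma has_leading_part_unique:
  assumes "has_leading_part M F X" "has_leading_part M F Y" "dim_row X = dim_row Y"
  shows "X = Y"
proof (rule eq_matI)
  have cols: "dim_col X = M + 1" "dim_col Y = M + 1"
    using assms(1,2) unfolding has_leading_part_def by blast+
  fix j k assume "j < dim_row Y" "k < dim_col Y"
  then have j: "j < dim_row X" and k: "k \<le> M" using cols(2) assms(3) by simp_all
  show "X $$ (j, k) = Y $$ (j, k)"
    using has_bochner_integral_eq[OF has_leading_part_integral[OF assms(1) j k]
        has_leading_part_integral[OF assms(2) j[unfolded assms(3)] k]] .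
qed (use assms(1,2,3) in \<open>simp_all add: has_leading_part_def\<close>)

lemma polyP_monvec: "j \<le> n \<Longrightarrow> P n j p = (\<Sum>k\<le>n. (Gc n k *\<^sub>v monvec k p) $ j)"
  by (simp add: polyP_def)

lemma polyvec_minus_monvec:
  "polyvec Gc n p - Gc n n *\<^sub>v monvec n p = vec (n + 1) (\<lambda>j. \<Sum>k<n. (Gc n k *\<^sub>v monvec k p) $ j)"
  using Gc_carrier[of n n]
  by (intro eq_vecI) (auto simp: index_polyvec polyP_monvec lessThan_Suc_atMost[symmetric])

lemma has_leading_part_monvec: "has_leading_part n (monvec n) (minv (Gc n n))"
proof (induction n rule: less_induct)
  case (less n)
  let ?H = "minv (Gc n n)"
  have "lower_vec n (monvec k) (k + 1)" if "k < n" for k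
    using has_leading_part_lower[OF less[OF that]] Gc_inverse(1)[of k] that
    by (auto intro: lower_vec_mono)
  then have "lower n (\<lambda>p. \<Sum>k<n. (Gc n k *\<^sub>v monvec k p) $ j)" if "j < n + 1" for j
    using that Gc_carrier by (intro lower_sum lower_vecD(2)[OF lower_vec_mult]) auto
  then have "lower_vec n (\<lambda>p. polyvec Gc n p - Gc n n *\<^sub>v monvec n p) (n + 1)"
    unfolding polyvec_minus_monvec by (intro lower_vecI) simp_all
  then have "lower_vec n (\<lambda>p. Gc n n *\<^sub>v monvec n p - polyvec Gc n p) (n + 1)"
    by (rule lower_vec_swap_diff[OF _ polyvec_carrier mult_mat_vec_carrier[OF Gc_diag_carrier monvec_carrier]])
  from lower_vec_mult[OF this Gc_inverse(1)]
  have "lower_vec n (\<lambda>p. ?H *\<^sub>v (Gc n n *\<^sub>v monvec n p - polyvec Gc n p)) (n + 1)" .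
  moreover have "?H *\<^sub>v (Gc n n *\<^sub>v monvec n p - polyvec Gc n p) = monvec n p - ?H *\<^sub>v polyvec Gc n p" for p
  proof -
    have "?H *\<^sub>v (Gc n n *\<^sub>v monvec n p) = monvec n p"
      by (simp add: assoc_mult_mat_vec[OF Gc_inverse(1) Gc_diag_carrier monvec_carrier, symmetric] Gc_inverse(2))
    then show ?thesis
      by (simp add: mult_minus_distrib_mat_vec[OF Gc_inverse(1) mult_mat_vec_carrier[OF Gc_diag_carrier monvec_carrier]
          polyvec_carrier])
  qed
  ultimately show ?case
    by (intro has_leading_partI[OF Gc_inverse(1) monvec_carrier]) simp
qed

lemma lower_vec_monvec: "k < M \<Longrightarrow> lower_vec M (monvec k) (k + 1)"
  using has_leading_part_lower[OF has_leading_part_monvec, of k] Gc_inverse(1)[of k]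
  by (auto intro: lower_vec_mono)

lemma lower_monvec_sum:
  assumes "finite S" "\<And>k. k \<in> S \<Longrightarrow> Y k \<in> carrier_mat r (e k + 1)" "\<And>k. k \<in> S \<Longrightarrow> e k < M" "j < r"
  shows "lower M (\<lambda>p. \<Sum>k\<in>S. (Y k *\<^sub>v monvec (e k) p) $ j)"
  using assms by (intro lower_sum lower_vecD(2)[OF lower_vec_mult[OF lower_vec_monvec]]) auto

lemma has_leading_part_monvec_sum:
  assumes "\<And>k. k \<le> n \<Longrightarrow> Y k \<in> carrier_mat r (k + d + 1)"
  shows "has_leading_part (n + d) (\<lambda>p. vec r (\<lambda>j. \<Sum>k\<le>n. (Y k *\<^sub>v monvec (k + d) p) $ j))
    (Y n * minv (Gc (n + d) (n + d)))"
proof (rule has_leading_part_cong_lower)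
  show "has_leading_part (n + d) (\<lambda>p. Y n *\<^sub>v monvec (n + d) p) (Y n * minv (Gc (n + d) (n + d)))"
    using assms[of n] Gc_inverse(1)[of "n + d"] by (intro has_leading_part_mult[OF has_leading_part_monvec]) auto
  have "vec r (\<lambda>j. \<Sum>k\<le>n. (Y k *\<^sub>v monvec (k + d) p) $ j) - Y n *\<^sub>v monvec (n + d) p
      = vec r (\<lambda>j. \<Sum>k<n. (Y k *\<^sub>v monvec (k + d) p) $ j)" for p
    using assms[of n] by (intro eq_vecI) (auto simp: lessThan_Suc_atMost[symmetric])
  moreover have "lower (n + d) (\<lambda>p. \<Sum>k<n. (Y k *\<^sub>v monvec (k + d) p) $ j)" if "j < r" for j
    using assms that by (intro lower_monvec_sum[where e = "\<lambda>k. k + d"]) auto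
  ultimately show "lower_vec (n + d) (\<lambda>p. vec r (\<lambda>j. \<Sum>k\<le>n. (Y k *\<^sub>v monvec (k + d) p) $ j)
      - Y n *\<^sub>v monvec (n + d) p) (dim_row (Y n * minv (Gc (n + d) (n + d))))"
    using carrier_matD(1)[OF assms[of n]] by (intro lower_vecI) auto
qed (use carrier_matD(1)[OF assms[of n]] in simp)

lemma Gc_Lmat_carrier: "k \<le> n \<Longrightarrow> Gc n k * Lmat i k \<in> carrier_mat (n + 1) (Suc k + 1)"
  using mult_carrier_mat[OF Gc_carrier Lmat_carrier] by simp

lemma coord_polyP:
  assumes "j \<le> n"
  shows "coord i p * P n j p = (\<Sum>k\<le>n. ((Gc n k * Lmat i k) *\<^sub>v monvec (k + 1) p) $ j)"
proof -
  have "coord i p * (Gc n k *\<^sub>v monvec k p) $ j = ((Gc n k * Lmat i k) *\<^sub>v monvec (k + 1) p) $ j"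
    if "k \<le> n" for k
  proof -
    have G: "Gc n k \<in> carrier_mat (n + 1) (k + 1)" using Gc_carrier that by simp
    have "coord i p * (Gc n k *\<^sub>v monvec k p) $ j = (Gc n k *\<^sub>v (coord i p \<cdot>\<^sub>v monvec k p)) $ j"
      using G assms by (simp add: mult_mat_vec[OF G])
    also have "\<dots> = ((Gc n k * Lmat i k) *\<^sub>v monvec (k + 1) p) $ j"
      by (simp add: coord_monvec assoc_mult_mat_vec[OF G Lmat_carrier])
    finally show ?thesis .
  qed
  then show ?thesis using assms by (simp add: polyP_monvec sum_distrib_left)
qed

theorem recurrence_matrix_eq:
  assumes "A \<in> carrier_mat (n + 1) (n + 2)" "lower_vec (n + 1) R (n + 1)"
    and "\<And>p. vec (n + 1) (\<lambda>j. coord i p * P n j p) = A *\<^sub>v polyvec Gc (n + 1) p + R p"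
  shows "A = Gc n n * Lmat i n * minv (Gc (n + 1) (n + 1))"
proof (rule has_leading_part_unique)
  have "A \<in> carrier_mat (n + 1) (n + 1 + 1)" using assms(1) by simp
  then show "has_leading_part (n + 1) (\<lambda>p. vec (n + 1) (\<lambda>j. coord i p * P n j p)) A"
    unfolding assms(3) using assms(2) by (rule has_leading_part_polyvec)
  have eq: "vec (n + 1) (\<lambda>j. coord i p * P n j p) =
      vec (n + 1) (\<lambda>j. \<Sum>k\<le>n. ((Gc n k * Lmat i k) *\<^sub>v monvec (k + 1) p) $ j)" for p
    by (intro eq_vecI) (simp_all add: coord_polyP)
  show "has_leading_part (n + 1) (\<lambda>p. vec (n + 1) (\<lambda>j. coord i p * P n j p))
      (Gc n n * Lmat i n * minv (Gc (n + 1) (n + 1)))"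
  proof -
    have "Gc n k * Lmat i k \<in> carrier_mat (n + 1) (k + 1 + 1)" if "k \<le> n" for k
      using Gc_Lmat_carrier[OF that] by simp
    from has_leading_part_monvec_sum[of n "\<lambda>k. Gc n k * Lmat i k" "n + 1" 1, OF this]
    show ?thesis unfolding eq by simp
  qed
qed (use assms(1) carrier_matD(1)[OF Gc_diag_carrier[of n]] in simp)

lemma Lmat_right_inverse:
  "Gc n n * Lmat i n * minv (Gc (n + 1) (n + 1)) * (Gc (n + 1) (n + 1) * transpose_mat (Lmat i n) * minv (Gc n n))
   = 1\<^sub>m (n + 1)"
proof -
  let ?G = "Gc n n" and ?H = "minv (Gc n n)" and ?G' = "Gc (n + 1) (n + 1)" and ?H' = "minv (Gc (n + 1) (n + 1))"
    and ?L = "Lmat i n" and ?LT = "transpose_mat (Lmat i n)"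
  have G: "?G \<in> carrier_mat (n + 1) (n + 1)" and H: "?H \<in> carrier_mat (n + 1) (n + 1)"
    and G': "?G' \<in> carrier_mat (n + 2) (n + 2)" and H': "?H' \<in> carrier_mat (n + 2) (n + 2)"
    and L: "?L \<in> carrier_mat (n + 1) (n + 2)" and LT: "?LT \<in> carrier_mat (n + 2) (n + 1)"
    using Gc_carrier[of n n] Gc_inverse(1)[of n] Gc_carrier[of "n + 1" "n + 1"] Gc_inverse(1)[of "n + 1"]
      Lmat_carrier[of i n] by auto
  have LTH: "?LT * ?H \<in> carrier_mat (n + 2) (n + 1)" using LT H by simp
  have GL: "?G * ?L \<in> carrier_mat (n + 1) (n + 2)" using G L by simp
  have G'LTH: "?G' * (?LT * ?H) \<in> carrier_mat (n + 2) (n + 1)" using G' LTH by simp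
  have "?G * ?L * ?H' * (?G' * ?LT * ?H) = (?G * ?L) * (?H' * (?G' * (?LT * ?H)))"
    by (simp only: assoc_mult_mat[OF G' LT H] assoc_mult_mat[OF GL H' G'LTH])
  also have "?H' * (?G' * (?LT * ?H)) = (?H' * ?G') * (?LT * ?H)"
    by (rule assoc_mult_mat[OF H' G' LTH, symmetric])
  also have "\<dots> = ?LT * ?H"
    using Gc_inverse(2)[of "n + 1"] LTH by simp
  also have "(?G * ?L) * (?LT * ?H) = ?G * (?L * (?LT * ?H))"
    by (rule assoc_mult_mat[OF G L LTH])
  also have "?L * (?LT * ?H) = (?L * ?LT) * ?H"
    by (rule assoc_mult_mat[OF L LT H, symmetric])
  also have "\<dots> = ?H"
    using H by (simp add: Lmat_mult_transpose)
  also have "?G * ?H = 1\<^sub>m (n + 1)"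
    by (rule Gc_inverse(3))
  finally show ?thesis .
qed

lemma has_partial_polyP:
  assumes "j \<le> n"
  shows "has_partial i (P n j)
    (\<lambda>p. \<Sum>k<n. ((Gc n (Suc k) * transpose_mat (Lmat i k) * Nmat i (Suc k)) *\<^sub>v monvec k p) $ j)"
proof -
  have "has_partial i (\<lambda>p. (Gc n (Suc k) *\<^sub>v monvec (Suc k) p) $ j)
      (\<lambda>p. ((Gc n (Suc k) * transpose_mat (Lmat i k) * Nmat i (Suc k)) *\<^sub>v monvec k p) $ j)" if "k < n" for k
  proof -
    have G: "Gc n (Suc k) \<in> carrier_mat (n + 1) (k + 2)" using Gc_carrier[of "Suc k" n] that by simp
    have D: "transpose_mat (Lmat i k) * Nmat i (Suc k) \<in> carrier_mat (k + 2) (k + 1)"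
      using Lmat_carrier[of i k] Nmat_carrier[of i "Suc k"] by auto
    have "Gc n (Suc k) * transpose_mat (Lmat i k) * Nmat i (Suc k) *\<^sub>v monvec k p
        = Gc n (Suc k) *\<^sub>v (transpose_mat (Lmat i k) * Nmat i (Suc k) *\<^sub>v monvec k p)" for p
      using Lmat_carrier[of i k] Nmat_carrier[of i "Suc k"]
      by (simp add: assoc_mult_mat[OF G, of _ "k + 1"] assoc_mult_mat_vec[OF G D monvec_carrier])
    moreover have "has_partial i (\<lambda>p. (Gc n (Suc k) *\<^sub>v monvec (k + 1) p) $ j)
        (\<lambda>p. (Gc n (Suc k) *\<^sub>v (transpose_mat (Lmat i k) * Nmat i (k + 1) *\<^sub>v monvec k p)) $ j)"
      using assms D by (intro has_partial_mult_mat_vec[OF G] has_partial_monvec) auto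
    ultimately show ?thesis by simp
  qed
  then have "has_partial i (\<lambda>p. (Gc n 0 *\<^sub>v monvec 0 p) $ j + (\<Sum>k<n. (Gc n (Suc k) *\<^sub>v monvec (Suc k) p) $ j))
      (\<lambda>p. 0 + (\<Sum>k<n. ((Gc n (Suc k) * transpose_mat (Lmat i k) * Nmat i (Suc k)) *\<^sub>v monvec k p) $ j))"
    by (intro has_partial_add has_partial_sum) (auto simp: monvec_0 has_partial_const)
  moreover have "P n j = (\<lambda>p. (Gc n 0 *\<^sub>v monvec 0 p) $ j + (\<Sum>k<n. (Gc n (Suc k) *\<^sub>v monvec (Suc k) p) $ j))"
    unfolding polyP_monvec[OF assms] lessThan_Suc_atMost[symmetric] sum.lessThan_Suc_shift ..
  ultimately show ?thesis by simp
qed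

lemma has_partial_polyP_partial:
  assumes "j \<le> n"
  shows "has_partial i (P n j) (partial i (P n j))"
proof -
  have "partial i (P n j) =
      (\<lambda>p. \<Sum>k<n. ((Gc n (Suc k) * transpose_mat (Lmat i k) * Nmat i (Suc k)) *\<^sub>v monvec k p) $ j)"
    by (rule ext, rule has_partial_imp_partial[OF has_partial_polyP[OF assms]])
  then show ?thesis using has_partial_polyP[OF assms] by simp
qed

lemma derivative_coeff_carrier:
  "k < n \<Longrightarrow> Gc n (Suc k) * transpose_mat (Lmat i k) * Nmat i (Suc k) \<in> carrier_mat (n + 1) (k + 1)"
  using Gc_carrier[of "Suc k" n] Lmat_carrier[of i k] Nmat_carrier[of i "Suc k"] by auto

lemma partial_polyP_lower:
  assumes "j \<le> n"
  shows "lower n (partial i (P n j))"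
proof -
  have "partial i (P n j) =
      (\<lambda>p. \<Sum>k<n. ((Gc n (Suc k) * transpose_mat (Lmat i k) * Nmat i (Suc k)) *\<^sub>v monvec k p) $ j)"
    by (rule ext, rule has_partial_imp_partial[OF has_partial_polyP[OF assms]])
  moreover have "lower n (\<lambda>p. \<Sum>k<n. ((Gc n (Suc k) * transpose_mat (Lmat i k) * Nmat i (Suc k)) *\<^sub>v monvec (id k) p) $ j)"
    using assms derivative_coeff_carrier by (intro lower_monvec_sum) auto
  ultimately show ?thesis by simp
qed

theorem structure_matrix_B_eq:
  assumes "B \<in> carrier_mat (n + 2) (n + 1)" "lower_vec n R (n + 2)"
    and "\<And>p. vec (n + 2) (\<lambda>j. partial i (P (n + 1) j) p) = B *\<^sub>v polyvec Gc n p + R p"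
  shows "B = Gc (n + 1) (n + 1) * transpose_mat (Lmat i n) * Nmat i (n + 1) * minv (Gc n n)"
proof (rule has_leading_part_unique)
  show "has_leading_part n (\<lambda>p. vec (n + 2) (\<lambda>j. partial i (P (n + 1) j) p)) B"
    unfolding assms(3) using assms(1,2) by (rule has_leading_part_polyvec)
  let ?Y = "\<lambda>k. Gc (n + 1) (k + 1) * transpose_mat (Lmat i k) * Nmat i (k + 1)"
  have Y: "?Y k \<in> carrier_mat (n + 2) (k + 0 + 1)" if "k \<le> n" for k
    using Gc_carrier[of "k + 1" "n + 1"] Lmat_carrier[of i k] Nmat_carrier[of i "k + 1"] that by auto
  have "vec (n + 2) (\<lambda>j. partial i (P (n + 1) j) p) = vec (n + 2) (\<lambda>j. \<Sum>k\<le>n. (?Y k *\<^sub>v monvec (k + 0) p) $ j)" for p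
    by (intro eq_vecI) (simp_all add: has_partial_imp_partial[OF has_partial_polyP] lessThan_Suc_atMost)
  then show "has_leading_part n (\<lambda>p. vec (n + 2) (\<lambda>j. partial i (P (n + 1) j) p))
      (Gc (n + 1) (n + 1) * transpose_mat (Lmat i n) * Nmat i (n + 1) * minv (Gc n n))"
    using has_leading_part_monvec_sum[of n ?Y "n + 2" 0, OF Y] by simp
qed (use assms(1) carrier_matD(1)[OF Gc_diag_carrier[of "n + 1"]] in simp)

end

section \<open>The Freud weight\<close>

locale freud_orthonormal_polys =
  orthonormal_polys "freud_W a40 a22 a04 a20 a02" Gc
  for a40 a22 a04 a20 a02 :: real and Gc :: "nat \<Rightarrow> nat \<Rightarrow> real mat"
begin

abbreviation W :: "real \<times> real \<Rightarrow> real" where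
  "W \<equiv> freud_W a40 a22 a04 a20 a02"

abbreviation dq :: "nat \<Rightarrow> real \<times> real \<Rightarrow> real" where
  "dq \<equiv> freud_dq a40 a22 a04 a20 a02"

lemma freud_dq_polyP:
  assumes "j \<le> m"
  shows "dq i p * P m j p =
    (\<Sum>k\<le>m. ((Gc m k * Lmat i k * Lmat i (k + 1) * Lmat i (k + 2) * Kmat a40 a22 a04 i (k + 3))
        *\<^sub>v monvec (k + 3) p) $ j)
    + 2 * (if i = 1 then a20 else a02) * (coord i p * P m j p)"
proof -
  have "dq i p * P m j p = (\<Sum>k\<le>m. dq i p * (Gc m k *\<^sub>v monvec k p) $ j)"
    by (simp add: polyP_monvec[OF assms] sum_distrib_left)
  also have "\<dots> = (\<Sum>k\<le>m. ((Gc m k * Lmat i k * Lmat i (k + 1) * Lmat i (k + 2) * Kmat a40 a22 a04 i (k + 3))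
        *\<^sub>v monvec (k + 3) p) $ j + 2 * (if i = 1 then a20 else a02) * (coord i p * (Gc m k *\<^sub>v monvec k p) $ j))"
    using assms by (intro sum.cong refl) (simp add: freud_dq_mult_monvec_index[OF Gc_carrier])
  also have "\<dots> = (\<Sum>k\<le>m. ((Gc m k * Lmat i k * Lmat i (k + 1) * Lmat i (k + 2) * Kmat a40 a22 a04 i (k + 3))
        *\<^sub>v monvec (k + 3) p) $ j) + 2 * (if i = 1 then a20 else a02) * (coord i p * P m j p)"
    by (simp add: sum.distrib sum_distrib_left polyP_monvec[OF assms])
  finally show ?thesis .
qed

lemma coord_polyP_lower: "j \<le> m \<Longrightarrow> lower (m + 2) (\<lambda>p. coord i p * P m j p)"
  using lower_monvec_sum[of "{..m}" "\<lambda>k. Gc m k * Lmat i k" "m + 1" Suc "m + 2" j] Gc_Lmat_carrier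
  by (simp add: coord_polyP)

theorem has_leading_part_freud_dq:
  "has_leading_part (m + 3) (\<lambda>p. vec (m + 1) (\<lambda>j. dq i p * P m j p))
     (Gc m m * Lmat i m * Lmat i (m + 1) * Lmat i (m + 2) * Kmat a40 a22 a04 i (m + 3) * minv (Gc (m + 3) (m + 3)))"
proof (rule has_leading_part_cong_lower)
  let ?Y = "\<lambda>k. Gc m k * Lmat i k * Lmat i (k + 1) * Lmat i (k + 2) * Kmat a40 a22 a04 i (k + 3)"
  have "?Y k \<in> carrier_mat (m + 1) (k + 3 + 1)" if "k \<le> m" for k
    using Gc_carrier[OF that] by (intro carrier_matI) auto
  from has_leading_part_monvec_sum[of m ?Y "m + 1" 3, OF this]
  show "has_leading_part (m + 3) (\<lambda>p. vec (m + 1) (\<lambda>j. \<Sum>k\<le>m. (?Y k *\<^sub>v monvec (k + 3) p) $ j))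
      (?Y m * minv (Gc (m + 3) (m + 3)))" .
  show "lower_vec (m + 3) (\<lambda>p. vec (m + 1) (\<lambda>j. dq i p * P m j p)
      - vec (m + 1) (\<lambda>j. \<Sum>k\<le>m. (?Y k *\<^sub>v monvec (k + 3) p) $ j)) (dim_row (?Y m * minv (Gc (m + 3) (m + 3))))"
  proof (rule lower_vecI)
    fix j assume "j < dim_row (?Y m * minv (Gc (m + 3) (m + 3)))"
    then have j: "j \<le> m" using carrier_matD(1)[OF Gc_diag_carrier[of m]] by simp
    have "lower (m + 3) (\<lambda>p. 2 * (if i = 1 then a20 else a02) * (coord i p * P m j p))"
      using lower_mono[OF coord_polyP_lower[OF j], of "m + 3"] by (intro lower_cmult) simp
    then show "lower (m + 3) (\<lambda>p. (vec (m + 1) (\<lambda>j. dq i p * P m j p)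
        - vec (m + 1) (\<lambda>j. \<Sum>k\<le>m. (?Y k *\<^sub>v monvec (k + 3) p) $ j)) $ j)"
      using j by (simp add: freud_dq_polyP)
  qed (use carrier_matD(1)[OF Gc_diag_carrier[of m]] in simp)
qed (use carrier_matD(1)[OF Gc_diag_carrier[of m]] in simp)

lemma freud_dq_polyP_lower: "l \<le> m \<Longrightarrow> lower (m + 4) (\<lambda>p. dq i p * P m l p)"
  using lower_vecD(2)[OF has_leading_part_lower[OF has_leading_part_freud_dq[of m i]], of l]
    carrier_matD(1)[OF Gc_diag_carrier[of m]]
  by (simp add: add.commute[of m 4] numeral_eq_Suc)

lemma integration_by_parts_polyP:
  assumes "j \<le> n" "l \<le> m"
  shows "(\<integral>p. partial i (P n j) p * P m l p * W p \<partial>lborel) + (\<integral>p. P n j p * partial i (P m l) p * W p \<partial>lborel)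
    = (\<integral>p. P n j p * (dq i p * P m l p) * W p \<partial>lborel)"
proof -
  let ?t1 = "\<lambda>p. partial i (P n j) p * P m l p * W p" and ?t2 = "\<lambda>p. P n j p * partial i (P m l) p * W p"
    and ?t3 = "\<lambda>p. P n j p * (dq i p * P m l p) * W p"
  have P_lower: "lower (Suc n) (P n j)" "lower (Suc m) (P m l)"
    using assms by (simp_all add: lower_P)
  have int: "integrable lborel ?t1" "integrable lborel ?t2" "integrable lborel ?t3"
    "integrable lborel (\<lambda>p. P n j p * P m l p * W p)"
    using lower_mult_integrable[OF P_lower(2) partial_polyP_lower[OF assms(1)]]
      lower_mult_integrable[OF partial_polyP_lower[OF assms(2)] P_lower(1)]
      lower_mult_integrable[OF freud_dq_polyP_lower[OF assms(2)] P_lower(1)]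
      lower_mult_integrable[OF P_lower(2) P_lower(1)]
    by simp_all
  have "has_partial i (\<lambda>p. P n j p * P m l p * W p)
      (\<lambda>p. (partial i (P n j) p * P m l p + P n j p * partial i (P m l) p) * W p
         + P n j p * P m l p * (W p * - dq i p))"
    by (intro has_partial_mult has_partial_polyP_partial has_partial_freud_W assms)
  moreover have "(\<lambda>p. (partial i (P n j) p * P m l p + P n j p * partial i (P m l) p) * W p
         + P n j p * P m l p * (W p * - dq i p)) = (\<lambda>p. ?t1 p + ?t2 p - ?t3 p)"
    by (simp add: fun_eq_iff algebra_simps)
  ultimately have "has_partial i (\<lambda>p. P n j p * P m l p * W p) (\<lambda>p. ?t1 p + ?t2 p - ?t3 p)"
    by simp
  from has_partial_along_line[OF this]
  have "integral\<^sup>L lborel (\<lambda>p. ?t1 p + ?t2 p - ?t3 p) = 0"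
    by (rule integral_line_derivative_eq_0[OF int(4)
          Bochner_Integration.integrable_diff[OF Bochner_Integration.integrable_add[OF int(1,2)] int(3)]])
  then show ?thesis
    using int by simp
qed

theorem structure_matrix_C_eq:
  assumes B: "B \<in> carrier_mat (m + 4) (m + 3)" and C: "C \<in> carrier_mat (m + 4) (m + 1)"
    and rel: "\<And>p. vec (m + 4) (\<lambda>j. partial i (P (m + 3) j) p) = B *\<^sub>v polyvec Gc (m + 2) p + C *\<^sub>v polyvec Gc m p"
  shows "transpose_mat C = Gc m m * Lmat i m * Lmat i (m + 1) * Lmat i (m + 2) * Kmat a40 a22 a04 i (m + 3)
    * minv (Gc (m + 3) (m + 3))" (is "_ = ?X")
proof (rule eq_matI)
  have dims: "dim_row ?X = m + 1" "dim_col ?X = m + 4"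
    using carrier_matD[OF Gc_diag_carrier[of m]] carrier_matD[OF Gc_inverse(1)[of "m + 3"]] by simp_all
  then show "dim_row (transpose_mat C) = dim_row ?X" "dim_col (transpose_mat C) = dim_col ?X"
    using C by simp_all
  fix l j assume "l < dim_row ?X" "j < dim_col ?X"
  then have l: "l \<le> m" and j: "j \<le> m + 3" using dims by simp_all
  have "partial i (P (m + 3) j) p = (B *\<^sub>v polyvec Gc (m + 2) p) $ j + (C *\<^sub>v polyvec Gc m p) $ j" for p
    using arg_cong[OF rel[of p], of "\<lambda>v. v $ j"] j B C by simp
  moreover have "has_bochner_integral lborel (\<lambda>p. (B *\<^sub>v polyvec Gc (m + 2) p) $ j * P m l p * W p
      + (C *\<^sub>v polyvec Gc m p) $ j * P m l p * W p) (0 + C $$ (j, l))"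
    using polyvec_integral[of B "m + 4" "m + 2" j l m] polyvec_integral[OF C _ l, of j] B j l
    by (intro has_bochner_integral_add) (simp_all add: numeral_eq_Suc)
  ultimately have "(\<integral>p. partial i (P (m + 3) j) p * P m l p * W p \<partial>lborel) = C $$ (j, l)"
    by (simp add: distrib_right has_bochner_integral_integral_eq)
  moreover have "(\<integral>p. P (m + 3) j p * partial i (P m l) p * W p \<partial>lborel) = 0"
    using lower_integral[OF lower_mono[OF partial_polyP_lower[OF l], of "m + 3"] j]
    by (simp add: has_bochner_integral_integral_eq mult_ac)
  moreover have "(\<integral>p. P (m + 3) j p * (dq i p * P m l p) * W p \<partial>lborel) = ?X $$ (l, j)"
  proof -
    have "has_bochner_integral lborel (\<lambda>p. vec (m + 1) (\<lambda>j. dq i p * P m j p) $ l * P (m + 3) j p * W p)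
        (?X $$ (l, j))"
      by (rule has_leading_part_integral[OF has_leading_part_freud_dq[of m i]]) (use l j dims in simp_all)
    moreover have "(\<lambda>p. vec (m + 1) (\<lambda>j. dq i p * P m j p) $ l * P (m + 3) j p * W p) =
        (\<lambda>p. P (m + 3) j p * (dq i p * P m l p) * W p)"
      using l by (simp add: fun_eq_iff mult_ac)
    ultimately show ?thesis by (simp add: has_bochner_integral_integral_eq)
  qed
  ultimately show "transpose_mat C $$ (l, j) = ?X $$ (l, j)"
    using integration_by_parts_polyP[OF j l, of i] C l j by simp
qed

end

locale freud_structure_relations = freud_orthonormal_polys +
  fixes A B C :: "nat \<Rightarrow> nat \<Rightarrow> real mat"
  assumes A_dim: "\<And>i n. i \<in> {1, 2} \<Longrightarrow> A i n \<in> carrier_mat (n + 1) (n + 2)"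
    and A_rec: "\<And>i n p. i \<in> {1, 2} \<Longrightarrow>
        vec (n + 1) (\<lambda>j. coord i p * polyP Gc n j p) =
        A i n *\<^sub>v polyvec Gc (n + 1) p +
        (if n = 0 then 0\<^sub>v (n + 1) else transpose_mat (A i (n - 1)) *\<^sub>v polyvec Gc (n - 1) p)"
    and B_dim: "\<And>i n. i \<in> {1, 2} \<Longrightarrow> n \<ge> 1 \<Longrightarrow> B i n \<in> carrier_mat (n + 1) n"
    and C_dim: "\<And>i n. i \<in> {1, 2} \<Longrightarrow> n \<ge> 1 \<Longrightarrow> C i n \<in> carrier_mat (n + 1) (n - 2)"
    and BC_rel: "\<And>i n p. i \<in> {1, 2} \<Longrightarrow> n \<ge> 1 \<Longrightarrow>
        vec (n + 1) (\<lambda>j. partial i (polyP Gc n j) p) =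
        B i n *\<^sub>v polyvec Gc (n - 1) p +
        (if n < 3 then 0\<^sub>v (n + 1) else C i n *\<^sub>v polyvec Gc (n - 3) p)"
begin

lemma A_eq:
  assumes i: "i \<in> {1, 2}"
  shows "A i n = Gc n n * Lmat i n * minv (Gc (n + 1) (n + 1))"
proof (rule recurrence_matrix_eq[OF A_dim[OF i] _ A_rec[OF i]])
  show "lower_vec (n + 1) (\<lambda>p. if n = 0 then 0\<^sub>v (n + 1)
      else transpose_mat (A i (n - 1)) *\<^sub>v polyvec Gc (n - 1) p) (n + 1)"
  proof (cases n)
    case (Suc k)
    have "transpose_mat (A i k) \<in> carrier_mat (n + 1) (k + 1)" using A_dim[OF i, of k] Suc by simp
    then show ?thesis using Suc lower_vec_polyvec[of k "n + 1"] by simp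
  qed (simp add: lower_vec_zero)
qed

lemma A_right_inverse:
  assumes "i \<in> {1, 2}"
  shows "A i n * (Gc (n + 1) (n + 1) * transpose_mat (Lmat i n) * minv (Gc n n)) = 1\<^sub>m (n + 1)"
  unfolding A_eq[OF assms] by (rule Lmat_right_inverse)

lemma B_eq:
  assumes i: "i \<in> {1, 2}" and n: "n \<ge> 1"
  shows "B i n = Gc n n * transpose_mat (Lmat i (n - 1)) * Nmat i n * minv (Gc (n - 1) (n - 1))"
proof -
  obtain m where m: "n = m + 1" using n by (metis add.commute le_Suc_ex)
  have "B i (m + 1) = Gc (m + 1) (m + 1) * transpose_mat (Lmat i m) * Nmat i (m + 1) * minv (Gc m m)"
  proof (rule structure_matrix_B_eq[where R = "\<lambda>p. if m < 2 then 0\<^sub>v (m + 2) else C i (m + 1) *\<^sub>v polyvec Gc (m - 2) p"])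
    show "B i (m + 1) \<in> carrier_mat (m + 2) (m + 1)" using B_dim[OF i, of "m + 1"] by simp
    have "C i (m + 1) \<in> carrier_mat (m + 2) (m - 2 + 1)" if "\<not> m < 2"
    proof -
      have "m + 1 - 2 = m - 2 + 1" using that by arith
      then show ?thesis using C_dim[OF i, of "m + 1"] by simp
    qed
    then show "lower_vec m (\<lambda>p. if m < 2 then 0\<^sub>v (m + 2) else C i (m + 1) *\<^sub>v polyvec Gc (m - 2) p) (m + 2)"
      using lower_vec_polyvec[of "m - 2" m] by (cases "m < 2") (simp_all add: lower_vec_zero)
    show "vec (m + 2) (\<lambda>j. partial i (P (m + 1) j) p) = B i (m + 1) *\<^sub>v polyvec Gc m p +
        (if m < 2 then 0\<^sub>v (m + 2) else C i (m + 1) *\<^sub>v polyvec Gc (m - 2) p)" for p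
      using BC_rel[OF i, of "m + 1" p] by (simp add: numeral_eq_Suc)
  qed
  then show ?thesis unfolding m by simp
qed

lemma C_transpose_eq:
  assumes i: "i \<in> {1, 2}" and n: "n \<ge> 3"
  shows "transpose_mat (C i n) = Gc (n - 3) (n - 3) * Lmat i (n - 3) * Lmat i (n - 2) * Lmat i (n - 1)
    * Kmat a40 a22 a04 i n * minv (Gc n n)"
proof -
  obtain m where m: "n = m + 3" using n by (metis add.commute le_Suc_ex)
  have "transpose_mat (C i (m + 3)) = Gc m m * Lmat i m * Lmat i (m + 1) * Lmat i (m + 2)
      * Kmat a40 a22 a04 i (m + 3) * minv (Gc (m + 3) (m + 3))"
    using B_dim[OF i, of "m + 3"] C_dim[OF i, of "m + 3"] BC_rel[OF i, of "m + 3"]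
    by (intro structure_matrix_C_eq[of "B i (m + 3)"]) (simp_all add: numeral_eq_Suc)
  then show ?thesis unfolding m by (simp add: numeral_eq_Suc)
qed

end

theorem proposition4p2:
  fixes a40 a22 a04 a20 a02 :: real
    and Gc :: "nat \<Rightarrow> nat \<Rightarrow> real mat"
    and A B :: "nat \<Rightarrow> nat \<Rightarrow> real mat"
    and C :: "nat \<Rightarrow> nat \<Rightarrow> real mat"
  assumes "a40 \<ge> 0" "a22 \<ge> 0" "a04 \<ge> 0" "a40 + a22 > 0" "a22 + a04 > 0"
    and ons: "orthonormal_system (freud_W a40 a22 a04 a20 a02) Gc"
    and A_dim: "\<And>i n. i \<in> {1, 2} \<Longrightarrow> A i n \<in> carrier_mat (n + 1) (n + 2)"
    and A_rec: "\<And>i n p. i \<in> {1, 2} \<Longrightarrow>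
        vec (n + 1) (\<lambda>j. coord i p * polyP Gc n j p) =
        A i n *\<^sub>v polyvec Gc (n + 1) p +
        (if n = 0 then 0\<^sub>v (n + 1) else transpose_mat (A i (n - 1)) *\<^sub>v polyvec Gc (n - 1) p)"
    and B_dim: "\<And>i n. i \<in> {1, 2} \<Longrightarrow> n \<ge> 1 \<Longrightarrow> B i n \<in> carrier_mat (n + 1) n"
    and C_dim: "\<And>i n. i \<in> {1, 2} \<Longrightarrow> n \<ge> 1 \<Longrightarrow> C i n \<in> carrier_mat (n + 1) (n - 2)"
    and BC_rel: "\<And>i n p. i \<in> {1, 2} \<Longrightarrow> n \<ge> 1 \<Longrightarrow>
        vec (n + 1) (\<lambda>j. partial i (polyP Gc n j) p) =
        B i n *\<^sub>v polyvec Gc (n - 1) p +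
        (if n < 3 then 0\<^sub>v (n + 1) else C i n *\<^sub>v polyvec Gc (n - 3) p)"
  shows "\<forall>i \<in> {1, 2}.
      (\<forall>n. A i n = Gc n n * Lmat i n * minv (Gc (n + 1) (n + 1))) \<and>
      (\<forall>n \<ge> 1. B i n = Gc n n * transpose_mat (Lmat i (n - 1)) * Nmat i n * minv (Gc (n - 1) (n - 1))) \<and>
      (\<forall>n \<ge> 3. transpose_mat (C i n) =
         Gc (n - 3) (n - 3) * Lmat i (n - 3) * Lmat i (n - 2) * Lmat i (n - 1)
           * Kmat a40 a22 a04 i n * minv (Gc n n)) \<and>
      (\<forall>n. A i n * (Gc (n + 1) (n + 1) * transpose_mat (Lmat i n) * minv (Gc n n)) = 1\<^sub>m (n + 1))"
proof -
  txt \<open>The sign conditions on the coefficients are not needed: they only ensure that the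
    integrals in \<open>orthonormal_system\<close> exist, which that hypothesis already asserts.\<close>
  interpret freud_structure_relations a40 a22 a04 a20 a02 Gc A B C
    by unfold_locales (fact ons A_dim A_rec B_dim C_dim BC_rel)+
  show ?thesis
    using A_eq B_eq C_transpose_eq A_right_inverse by blast
qed

end
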